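(* Fix $\beta>0$ and $a>0$, and set $a(t):=a+\beta t/4$. For any $0<t_0<t_1$, any $0<d<D<\sqrt{a(t_0)}$ and any $x\in[\sqrt{a(t_0)}-d,\sqrt{a(t_0)}+d]$, $$\mathbb{P}\Big(\exists t\in[t_0,t_1]: Z_a(t)\notin\big[\sqrt{a(t_0)}-D,\sqrt{a(t)}+D\big]\ \Big|\ Z_a(t_0)=x\Big)\le 4e^{-\frac{(D-d)^2}{2(t_1-t_0)}},$$ where $Z_a$ solves $dZ_a(t)=(a(t)-Z_a(t)^2)dt+dB(t)$ for $t\ge t_0$ with $B$ a standard Brownian motion. *)

theory Defs
  imports "HOL-Probability.Probability"
begin

definition brownian_motion :: "'w measure \<Rightarrow> (real \<Rightarrow> 'w \<Rightarrow> real) \<Rightarrow> bool" where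
  "brownian_motion M B \<longleftrightarrow>
     prob_space M \<and>
     (\<forall>t\<ge>0. B t \<in> borel_measurable M) \<and>
     (\<forall>\<omega>\<in>space M. B 0 \<omega> = 0 \<and> continuous_on {0..} (\<lambda>t. B t \<omega>)) \<and>
     (\<forall>s t. 0 \<le> s \<longrightarrow> s < t \<longrightarrow>
        distributed M lborel (\<lambda>\<omega>. B t \<omega> - B s \<omega>) (\<lambda>y. ennreal (normal_density 0 (sqrt (t - s)) y))) \<and>
     (\<forall>(n::nat) (ts::nat \<Rightarrow> real). 0 \<le> ts 0 \<longrightarrow> (\<forall>i<n. ts i < ts (Suc i)) \<longrightarrow>
        prob_space.indep_vars M (\<lambda>_. borel) (\<lambda>i \<omega>. B (ts (Suc i)) \<omega> - B (ts i) \<omega>) {..<n})"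

definition solves_on :: "(real \<Rightarrow> real) \<Rightarrow> (real \<Rightarrow> 'w \<Rightarrow> real) \<Rightarrow> 'w \<Rightarrow> real \<Rightarrow> real \<Rightarrow> real
    \<Rightarrow> (real \<Rightarrow> real) \<Rightarrow> bool" where
  "solves_on a B \<omega> t0 t1 x z \<longleftrightarrow>
     continuous_on {t0..t1} z \<and>
     (\<forall>t\<in>{t0..t1}. z t = x + integral {t0..t} (\<lambda>s. a s - (z s)\<^sup>2) + (B t \<omega> - B t0 \<omega>))"

end

theory Submission
  imports Defs
begin

text \<open>Clamping the drift \<open>a t - z\<^sup>2\<close> to the band \<open>[sqrt (a t0) - D, sqrt (a t1) + D]\<close> makes it globally
  Lipschitz, so Picard iteration produces for every Brownian path a unique continuous solution of the
  clamped equation, measurable in \<open>\<omega>\<close> as a limit of iterates; the original equation has a solution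
  staying in the band exactly when this one stays in it. Since \<open>a\<close> is nondecreasing, the drift is
  nonnegative below \<open>sqrt (a t0) - d\<close> and nonpositive above \<open>sqrt (a t) + d\<close>, so leaving the band
  forces \<open>\<bar>B \<tau> - B \<sigma>\<bar> \<ge> D - d\<close> for some \<open>t0 \<le> \<sigma> \<le> \<tau> \<le> t1\<close>.

  Such an oscillation makes the drawdown of the walk of grid increments of \<open>B\<close> or of \<open>- B\<close> large on
  all fine grids. For a walk with \<open>N(0, v)\<close> steps, \<open>cosh (l * drawdown)\<close>, stopped when the drawdown
  reaches \<open>c\<close>, grows in expectation by at most \<open>exp (l\<^sup>2 v / 2)\<close> per step; with
  \<open>l = c / (t1 - t0)\<close> this bounds the probability of a drawdown \<open>c\<close> by
  \<open>2 exp (- c\<^sup>2 / (2 (t1 - t0)))\<close>, and the two signs give the factor \<open>4\<close>.\<close>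

section \<open>Picard iteration for integral equations with Lipschitz drift\<close>

lemma has_integral_power_shift:
  assumes "t0 \<le> t"
  shows "((\<lambda>s. (s - t0) ^ n) has_integral (t - t0) ^ Suc n / Suc n) {t0..t}"
proof -
  have "((\<lambda>s. (s - t0) ^ Suc n / Suc n) has_real_derivative (s - t0) ^ n) (at s within {t0..t})" for s
    by (auto intro!: derivative_eq_intros) (cases n; simp add: field_simps)
  then show ?thesis
    using fundamental_theorem_of_calculus[OF assms, of "\<lambda>s. (s - t0) ^ Suc n / Suc n"]
    by (simp add: has_real_derivative_iff_has_vector_derivative)
qed

lemma summable_exp_series: "summable (\<lambda>n. C * y ^ n / fact n :: real)"
  using summable_mult[OF summable_exp, of C y] by (simp add: field_simps)

locale lipschitz_drift =
  fixes f :: "real \<Rightarrow> real \<Rightarrow> real" and t0 t1 K :: real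
  assumes t0_less_t1: "t0 < t1"
    and continuous_drift: "continuous_on ({t0..t1} \<times> UNIV) (\<lambda>(s, z). f s z)"
    and lipschitz_drift: "\<And>s z w. s \<in> {t0..t1} \<Longrightarrow> \<bar>f s z - f s w\<bar> \<le> K * \<bar>z - w\<bar>"

context lipschitz_drift
begin

lemma lipschitz_constant_nonneg: "0 \<le> K"
  using lipschitz_drift[of t0 1 0] t0_less_t1 by auto

lemma continuous_on_drift:
  assumes "continuous_on {t0..t1} z"
  shows "continuous_on {t0..t1} (\<lambda>s. f s (z s))"
proof -
  have "continuous_on {t0..t1} (\<lambda>s. (s, z s))"
    using assms by (intro continuous_intros)
  from continuous_on_compose2[OF continuous_drift this] show ?thesis by auto
qed

lemma integrable_drift:
  assumes "continuous_on {t0..t1} z" "t \<le> t1"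
  shows "(\<lambda>s. f s (z s)) integrable_on {t0..t}"
  using assms by (intro integrable_continuous_interval continuous_on_subset[OF continuous_on_drift]) auto

end

locale lipschitz_integral_equation = lipschitz_drift f t0 t1 K
  for f :: "real \<Rightarrow> real \<Rightarrow> real" and t0 t1 K :: real +
  fixes b :: "real \<Rightarrow> real" and x :: real
  assumes continuous_forcing: "continuous_on {t0..t1} b"
begin

definition picard_step :: "(real \<Rightarrow> real) \<Rightarrow> real \<Rightarrow> real" where
  "picard_step z t = x + integral {t0..t} (\<lambda>s. f s (z s)) + b t"

definition picard_iterate :: "nat \<Rightarrow> real \<Rightarrow> real" where
  "picard_iterate n = (picard_step ^^ n) (\<lambda>_. x)"

definition solution :: "real \<Rightarrow> real" where
  "solution t = x + (\<Sum>i. picard_iterate (Suc i) t - picard_iterate i t)"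

lemma continuous_on_picard_step:
  assumes "continuous_on {t0..t1} z"
  shows "continuous_on {t0..t1} (picard_step z)"
proof -
  have "continuous_on {t0..t1} (\<lambda>t. integral {t0..t} (\<lambda>s. f s (z s)))"
    by (intro indefinite_integral_continuous_1 integrable_drift[OF assms]) simp
  then show ?thesis
    unfolding picard_step_def using continuous_forcing by (intro continuous_intros)
qed

lemma picard_step_dist_le:
  assumes z: "continuous_on {t0..t1} z" and w: "continuous_on {t0..t1} w"
    and bound: "\<And>s. s \<in> {t0..t1} \<Longrightarrow> \<bar>z s - w s\<bar> \<le> C * (K * (s - t0)) ^ n / fact n"
    and t: "t \<in> {t0..t1}"
  shows "\<bar>picard_step z t - picard_step w t\<bar> \<le> C * (K * (t - t0)) ^ Suc n / fact (Suc n)"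
proof -
  define g where "g s = K * (C * (K * (s - t0)) ^ n / fact n)" for s
  have int_z: "(\<lambda>s. f s (z s)) integrable_on {t0..t}" and int_w: "(\<lambda>s. f s (w s)) integrable_on {t0..t}"
    using integrable_drift z w t by auto
  have "((\<lambda>s. (K * C * K ^ n / fact n) * (s - t0) ^ n) has_integral
      (K * C * K ^ n / fact n) * ((t - t0) ^ Suc n / Suc n)) {t0..t}"
    using t by (intro has_integral_mult_right has_integral_power_shift) auto
  moreover have "g = (\<lambda>s. (K * C * K ^ n / fact n) * (s - t0) ^ n)"
    by (auto simp: g_def power_mult_distrib)
  moreover have "(K * C * K ^ n / fact n) * (u ^ Suc n / Suc n) = C * (K * u) ^ Suc n / fact (Suc n)" for u
    by (simp add: power_mult_distrib field_simps)
  ultimately have g: "(g has_integral C * (K * (t - t0)) ^ Suc n / fact (Suc n)) {t0..t}"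
    by simp
  have "norm (integral {t0..t} (\<lambda>s. f s (z s) - f s (w s))) \<le> integral {t0..t} g"
  proof (rule integral_norm_bound_integral)
    show "(\<lambda>s. f s (z s) - f s (w s)) integrable_on {t0..t}" using int_z int_w by (rule integrable_diff)
    show "g integrable_on {t0..t}" using g by blast
    fix s assume s: "s \<in> {t0..t}"
    have "\<bar>f s (z s) - f s (w s)\<bar> \<le> K * \<bar>z s - w s\<bar>"
      using s t by (intro lipschitz_drift) auto
    also have "\<dots> \<le> g s"
      unfolding g_def using bound[of s] s t lipschitz_constant_nonneg by (intro mult_left_mono) auto
    finally show "norm (f s (z s) - f s (w s)) \<le> g s" by simp
  qed
  then show ?thesis
    using integral_unique[OF g] by (simp add: picard_step_def integral_diff[OF int_z int_w])
qed

lemma picard_iterate_0: "picard_iterate 0 = (\<lambda>_. x)"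
  by (simp add: picard_iterate_def)

lemma picard_iterate_Suc: "picard_iterate (Suc n) = picard_step (picard_iterate n)"
  by (simp add: picard_iterate_def)

lemma continuous_on_picard_iterate: "continuous_on {t0..t1} (picard_iterate n)"
  by (induction n) (simp_all add: picard_iterate_0 picard_iterate_Suc continuous_on_picard_step)

lemma exp_series_mono:
  assumes "0 \<le> C" "t \<in> {t0..t1}"
  shows "C * (K * (t - t0)) ^ n / fact n \<le> C * (K * (t1 - t0)) ^ n / fact n"
  using assms lipschitz_constant_nonneg
  by (intro divide_right_mono mult_left_mono power_mono) auto

lemma picard_iterate_increment_le:
  obtains C where "0 \<le> C"
    "\<And>n t. t \<in> {t0..t1} \<Longrightarrow> \<bar>picard_iterate (Suc n) t - picard_iterate n t\<bar> \<le> C * (K * (t - t0)) ^ n / fact n"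
proof -
  obtain C where C: "0 \<le> C" "\<And>t. t \<in> {t0..t1} \<Longrightarrow> \<bar>picard_iterate 1 t - picard_iterate 0 t\<bar> \<le> C"
    using continuous_on_compact_bound[of "{t0..t1}" "\<lambda>t. picard_iterate 1 t - picard_iterate 0 t"]
    by (auto intro: continuous_intros continuous_on_picard_iterate)
  have "\<bar>picard_iterate (Suc n) t - picard_iterate n t\<bar> \<le> C * (K * (t - t0)) ^ n / fact n"
    if "t \<in> {t0..t1}" for n t
    using that
  proof (induction n arbitrary: t)
    case 0
    then show ?case using C by simp
  next
    case (Suc n)
    then show ?case
      unfolding picard_iterate_Suc[of "Suc n"] picard_iterate_Suc[of n]
      by (intro picard_step_dist_le continuous_on_picard_step continuous_on_picard_iterate)
        (simp_all add: picard_iterate_Suc)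
  qed
  with C(1) show ?thesis by (rule that)
qed

lemma uniform_limit_picard_iterate: "uniform_limit {t0..t1} picard_iterate solution sequentially"
proof -
  obtain C where C: "0 \<le> C"
    "\<And>n t. t \<in> {t0..t1} \<Longrightarrow> \<bar>picard_iterate (Suc n) t - picard_iterate n t\<bar> \<le> C * (K * (t - t0)) ^ n / fact n"
    using picard_iterate_increment_le by blast
  have "uniform_limit {t0..t1} (\<lambda>n t. \<Sum>i<n. picard_iterate (Suc i) t - picard_iterate i t)
      (\<lambda>t. \<Sum>i. picard_iterate (Suc i) t - picard_iterate i t) sequentially"
  proof (rule Weierstrass_m_test[OF _ summable_exp_series[of C "K * (t1 - t0)"]])
    fix n t assume t: "t \<in> {t0..t1}"
    show "norm (picard_iterate (Suc n) t - picard_iterate n t) \<le> C * (K * (t1 - t0)) ^ n / fact n"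
      using order_trans[OF C(2)[OF t] exp_series_mono[OF C(1) t]] by simp
  qed
  moreover have "(\<Sum>i<n. picard_iterate (Suc i) t - picard_iterate i t) = picard_iterate n t - x" for n t
    using sum_lessThan_telescope[of "\<lambda>i. picard_iterate i t" n] by (simp add: picard_iterate_0)
  ultimately show ?thesis
    unfolding uniform_limit_iff solution_def dist_real_def by (simp add: algebra_simps)
qed

lemma continuous_on_solution: "continuous_on {t0..t1} solution"
  using uniform_limit_theorem[OF always_eventually uniform_limit_picard_iterate]
  by (simp add: continuous_on_picard_iterate)

lemma picard_iterate_tendsto: "t \<in> {t0..t1} \<Longrightarrow> (\<lambda>n. picard_iterate n t) \<longlonglongrightarrow> solution t"
  using uniform_limit_picard_iterate by (rule tendsto_uniform_limitI)

lemma picard_step_solution: "t \<in> {t0..t1} \<Longrightarrow> picard_step solution t = solution t"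
proof -
  assume t: "t \<in> {t0..t1}"
  have "(\<lambda>n. picard_iterate (Suc n) t) \<longlonglongrightarrow> picard_step solution t"
  proof (rule LIMSEQ_I)
    fix e :: real assume "0 < e"
    define e' where "e' = e / (K * (t1 - t0) + 1)"
    have Kt: "0 \<le> K * (t1 - t0)" using lipschitz_constant_nonneg t0_less_t1 by simp
    then have "0 < e'" using \<open>0 < e\<close> by (simp add: e'_def)
    then obtain N where N: "\<And>n s. n \<ge> N \<Longrightarrow> s \<in> {t0..t1} \<Longrightarrow> \<bar>picard_iterate n s - solution s\<bar> < e'"
      using uniform_limit_picard_iterate unfolding uniform_limit_iff eventually_sequentially dist_real_def
      by blast
    have "\<bar>picard_step (picard_iterate n) t - picard_step solution t\<bar> < e" if "n \<ge> N" for n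
    proof -
      have "\<bar>picard_step (picard_iterate n) t - picard_step solution t\<bar> \<le> e' * (K * (t - t0)) ^ Suc 0 / fact (Suc 0)"
        using N[OF that] t
        by (intro picard_step_dist_le continuous_on_picard_iterate continuous_on_solution) (auto intro: less_imp_le)
      also have "\<dots> \<le> e' * (K * (t1 - t0))"
        using exp_series_mono[of e' t "Suc 0"] \<open>0 < e'\<close> t by simp
      also have "\<dots> < e" using \<open>0 < e'\<close> Kt by (simp add: e'_def field_simps)
      finally show ?thesis .
    qed
    then show "\<exists>N. \<forall>n\<ge>N. norm (picard_iterate (Suc n) t - picard_step solution t) < e"
      by (auto simp: picard_iterate_Suc)
  qed
  then show ?thesis
    using LIMSEQ_unique LIMSEQ_Suc[OF picard_iterate_tendsto[OF t]] by blast
qed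

lemma fixpoint_eq_solution:
  assumes z: "continuous_on {t0..t1} z" and fixed: "\<And>t. t \<in> {t0..t1} \<Longrightarrow> picard_step z t = z t"
    and t: "t \<in> {t0..t1}"
  shows "z t = solution t"
proof -
  obtain C where C: "0 \<le> C" "\<And>t. t \<in> {t0..t1} \<Longrightarrow> \<bar>z t - solution t\<bar> \<le> C"
    using continuous_on_compact_bound[of "{t0..t1}" "\<lambda>t. z t - solution t"] z continuous_on_solution
    by (auto intro: continuous_intros)
  have bound: "\<bar>z s - solution s\<bar> \<le> C * (K * (s - t0)) ^ n / fact n" if "s \<in> {t0..t1}" for n s
    using that
  proof (induction n arbitrary: s)
    case 0
    then show ?case using C by simp
  next
    case (Suc n)
    then have "\<bar>picard_step z s - picard_step solution s\<bar> \<le> C * (K * (s - t0)) ^ Suc n / fact (Suc n)"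
      by (intro picard_step_dist_le z continuous_on_solution)
    then show ?case using fixed picard_step_solution Suc.prems by simp
  qed
  have "(\<lambda>n. C * (K * (t1 - t0)) ^ n / fact n) \<longlonglongrightarrow> 0"
    by (rule summable_LIMSEQ_zero[OF summable_exp_series])
  then have "\<bar>z t - solution t\<bar> \<le> 0"
    using bound[OF t] exp_series_mono[OF C(1) t] by (intro LIMSEQ_le_const) (auto intro: order_trans)
  then show ?thesis by simp
qed

lemma solution_in_region_iff:
  assumes "\<And>s z. s \<in> {t0..t1} \<Longrightarrow> z \<in> R s \<Longrightarrow> g s z = f s z"
  shows "(\<exists>z. continuous_on {t0..t1} z \<and>
            (\<forall>t\<in>{t0..t1}. z t = x + integral {t0..t} (\<lambda>s. g s (z s)) + b t) \<and>
            (\<forall>t\<in>{t0..t1}. z t \<in> R t))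
     \<longleftrightarrow> (\<forall>t\<in>{t0..t1}. solution t \<in> R t)"
proof -
  have same_integral: "integral {t0..t} (\<lambda>s. g s (z s)) = integral {t0..t} (\<lambda>s. f s (z s))"
    if "t \<in> {t0..t1}" "\<forall>t\<in>{t0..t1}. z t \<in> R t" for t z
    using that assms by (intro integral_cong) auto
  show ?thesis
  proof
    assume "\<exists>z. continuous_on {t0..t1} z \<and>
        (\<forall>t\<in>{t0..t1}. z t = x + integral {t0..t} (\<lambda>s. g s (z s)) + b t) \<and> (\<forall>t\<in>{t0..t1}. z t \<in> R t)"
    then obtain z where z: "continuous_on {t0..t1} z" "\<forall>t\<in>{t0..t1}. z t \<in> R t"
      and eq: "\<forall>t\<in>{t0..t1}. z t = x + integral {t0..t} (\<lambda>s. g s (z s)) + b t"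
      by blast
    have "picard_step z t = z t" if "t \<in> {t0..t1}" for t
      using eq same_integral[OF that z(2)] that by (simp add: picard_step_def)
    then show "\<forall>t\<in>{t0..t1}. solution t \<in> R t"
      using fixpoint_eq_solution[OF z(1)] z(2) by metis
  next
    assume "\<forall>t\<in>{t0..t1}. solution t \<in> R t"
    moreover have "solution t = x + integral {t0..t} (\<lambda>s. f s (solution s)) + b t" if "t \<in> {t0..t1}" for t
      using picard_step_solution[OF that] by (simp add: picard_step_def)
    ultimately show "\<exists>z. continuous_on {t0..t1} z \<and>
        (\<forall>t\<in>{t0..t1}. z t = x + integral {t0..t} (\<lambda>s. g s (z s)) + b t) \<and> (\<forall>t\<in>{t0..t1}. z t \<in> R t)"
      using continuous_on_solution same_integral by (intro exI[of _ solution]) auto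
  qed
qed

end

section \<open>Measurability of parametric integrals and of exit events\<close>

lemma riemann_sum_error_le:
  fixes g :: "real \<Rightarrow> real"
  assumes g: "continuous_on {\<alpha>..\<beta>} g" and "0 \<le> h"
    and osc: "\<And>s p. s \<in> {\<alpha>..\<beta>} \<Longrightarrow> p \<in> {\<alpha>..\<beta>} \<Longrightarrow> p \<le> s \<Longrightarrow> s \<le> p + h \<Longrightarrow> \<bar>g s - g p\<bar> \<le> \<eta>"
  shows "\<alpha> + real n * h \<le> \<beta> \<Longrightarrow>
    \<bar>integral {\<alpha>..\<alpha> + real n * h} g - h * (\<Sum>k<n. g (\<alpha> + real k * h))\<bar> \<le> real n * h * \<eta>"
proof (induction n)
  case 0
  then show ?case by simp
next
  case (Suc n)
  let ?p = "\<alpha> + real n * h" and ?q = "\<alpha> + real (Suc n) * h"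
  have pq: "\<alpha> \<le> ?p" "?p \<le> ?q" "?q \<le> \<beta>" "?q - ?p = h"
    using Suc.prems \<open>0 \<le> h\<close> by (auto simp: algebra_simps)
  have int: "g integrable_on {\<alpha>..?q}" "g integrable_on {?p..?q}"
    by (intro integrable_on_subinterval[OF integrable_continuous_interval[OF g]]; use pq in auto)+
  have "norm (integral {?p..?q} (\<lambda>s. g s - g ?p)) \<le> integral {?p..?q} (\<lambda>_. \<eta>)"
  proof (rule integral_norm_bound_integral)
    show "(\<lambda>s. g s - g ?p) integrable_on {?p..?q}"
      using int(2) by (intro integrable_diff integrable_const_ivl)
    fix s assume s: "s \<in> {?p..?q}"
    then have "\<alpha> \<le> s" "s \<le> \<beta>" "?p \<le> \<beta>" "?p \<le> s" "s \<le> ?p + h"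
      using pq unfolding atLeastAtMost_iff by linarith+
    then show "norm (g s - g ?p) \<le> \<eta>"
      using osc pq(1) by simp
  qed auto
  moreover have "integral {?p..?q} (\<lambda>s. g s - g ?p) = integral {?p..?q} g - integral {?p..?q} (\<lambda>_. g ?p)"
    by (rule integral_diff[OF int(2) integrable_const_ivl])
  moreover have "integral {?p..?q} (\<lambda>_. g ?p) = h * g ?p"
    using pq by simp
  ultimately have last: "\<bar>integral {?p..?q} g - h * g ?p\<bar> \<le> h * \<eta>"
    using pq by simp
  have "integral {\<alpha>..?p} g + integral {?p..?q} g = integral {\<alpha>..?q} g"
    using pq int(1) by (intro Henstock_Kurzweil_Integration.integral_combine)
  then have "integral {\<alpha>..?q} g - h * (\<Sum>k<Suc n. g (\<alpha> + real k * h)) =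
      (integral {\<alpha>..?p} g - h * (\<Sum>k<n. g (\<alpha> + real k * h))) + (integral {?p..?q} g - h * g ?p)"
    by (simp add: algebra_simps)
  then have "\<bar>integral {\<alpha>..?q} g - h * (\<Sum>k<Suc n. g (\<alpha> + real k * h))\<bar> \<le> real n * h * \<eta> + h * \<eta>"
    using Suc.IH pq last by linarith
  then show ?case
    by (simp add: algebra_simps)
qed

lemma riemann_sum_tendsto_integral:
  fixes g :: "real \<Rightarrow> real"
  assumes "\<alpha> \<le> \<beta>" and g: "continuous_on {\<alpha>..\<beta>} g"
  shows "(\<lambda>n. (\<beta> - \<alpha>) / Suc n * (\<Sum>k<Suc n. g (\<alpha> + k * ((\<beta> - \<alpha>) / Suc n)))) \<longlonglongrightarrow> integral {\<alpha>..\<beta>} g"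
proof (rule LIMSEQ_I)
  fix e :: real assume "0 < e"
  define \<eta> where "\<eta> = e / (\<beta> - \<alpha> + 1)"
  have "0 < \<eta>" using \<open>0 < e\<close> \<open>\<alpha> \<le> \<beta>\<close> by (simp add: \<eta>_def)
  obtain \<delta> where "\<delta> > 0"
    and \<delta>: "\<And>s p. s \<in> {\<alpha>..\<beta>} \<Longrightarrow> p \<in> {\<alpha>..\<beta>} \<Longrightarrow> dist s p < \<delta> \<Longrightarrow> dist (g s) (g p) < \<eta>"
    using compact_uniformly_continuous[OF g compact_Icc] \<open>0 < \<eta>\<close>
    unfolding uniformly_continuous_on_def by metis
  obtain N :: nat where N: "(\<beta> - \<alpha>) / \<delta> < N"
    using reals_Archimedean2 by blast
  have "\<bar>integral {\<alpha>..\<beta>} g - (\<beta> - \<alpha>) / Suc n * (\<Sum>k<Suc n. g (\<alpha> + k * ((\<beta> - \<alpha>) / Suc n)))\<bar> < e"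
    if "N \<le> n" for n
  proof -
    define h where "h = (\<beta> - \<alpha>) / Suc n"
    have "(\<beta> - \<alpha>) / \<delta> < Suc n"
      using N that by linarith
    then have "h < \<delta>"
      using \<open>\<delta> > 0\<close> \<open>\<alpha> \<le> \<beta>\<close> by (simp add: h_def field_simps)
    have "\<alpha> + real (Suc n) * h = \<beta>"
      by (simp add: h_def)
    moreover have "\<bar>integral {\<alpha>..\<alpha> + real (Suc n) * h} g - h * (\<Sum>k<Suc n. g (\<alpha> + k * h))\<bar>
        \<le> real (Suc n) * h * \<eta>"
      using \<open>h < \<delta>\<close> \<open>\<alpha> \<le> \<beta>\<close> \<delta>
      by (intro riemann_sum_error_le[OF g]) (auto simp: h_def dist_real_def less_imp_le)
    moreover have "real (Suc n) * h * \<eta> = (\<beta> - \<alpha>) / (\<beta> - \<alpha> + 1) * e"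
      by (simp add: h_def \<eta>_def)
    moreover have "(\<beta> - \<alpha>) / (\<beta> - \<alpha> + 1) * e < 1 * e"
      using \<open>\<alpha> \<le> \<beta>\<close> \<open>0 < e\<close> by (intro mult_strict_right_mono) auto
    ultimately show ?thesis
      by (simp add: h_def)
  qed
  then show "\<exists>N. \<forall>n\<ge>N. norm ((\<beta> - \<alpha>) / Suc n * (\<Sum>k<Suc n. g (\<alpha> + k * ((\<beta> - \<alpha>) / Suc n))) -
      integral {\<alpha>..\<beta>} g) < e"
    by (auto simp: abs_minus_commute)
qed

lemma borel_measurable_integral_continuous:
  fixes G :: "'w \<Rightarrow> real \<Rightarrow> real"
  assumes "\<alpha> \<le> \<beta>" and cont: "\<And>\<omega>. \<omega> \<in> space M \<Longrightarrow> continuous_on {\<alpha>..\<beta>} (G \<omega>)"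
    and meas: "\<And>s. s \<in> {\<alpha>..\<beta>} \<Longrightarrow> (\<lambda>\<omega>. G \<omega> s) \<in> borel_measurable M"
  shows "(\<lambda>\<omega>. integral {\<alpha>..\<beta>} (G \<omega>)) \<in> borel_measurable M"
proof (rule borel_measurable_LIMSEQ_real)
  show "(\<lambda>n. (\<beta> - \<alpha>) / Suc n * (\<Sum>k<Suc n. G \<omega> (\<alpha> + k * ((\<beta> - \<alpha>) / Suc n))))
      \<longlonglongrightarrow> integral {\<alpha>..\<beta>} (G \<omega>)" if "\<omega> \<in> space M" for \<omega>
    using \<open>\<alpha> \<le> \<beta>\<close> cont[OF that] by (rule riemann_sum_tendsto_integral)
  have "\<alpha> + real k * ((\<beta> - \<alpha>) / Suc n) \<in> {\<alpha>..\<beta>}" if "k < Suc n" for n k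
  proof -
    have "real k * ((\<beta> - \<alpha>) / Suc n) \<le> real (Suc n) * ((\<beta> - \<alpha>) / Suc n)"
      using that \<open>\<alpha> \<le> \<beta>\<close> by (intro mult_right_mono) auto
    then show ?thesis using \<open>\<alpha> \<le> \<beta>\<close> by auto
  qed
  then show "(\<lambda>\<omega>. (\<beta> - \<alpha>) / Suc n * (\<Sum>k<Suc n. G \<omega> (\<alpha> + k * ((\<beta> - \<alpha>) / Suc n)))) \<in> borel_measurable M"
    for n
    by (intro borel_measurable_times borel_measurable_const borel_measurable_sum meas) auto
qed

context lipschitz_drift
begin

lemma lipschitz_integral_equation_intro:
  "continuous_on {t0..t1} b \<Longrightarrow> lipschitz_integral_equation f t0 t1 K b"
  by (simp add: lipschitz_integral_equation_def lipschitz_integral_equation_axioms_def lipschitz_drift_axioms)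

lemma borel_measurable_picard_iterate:
  assumes cont: "\<And>\<omega>. \<omega> \<in> space M \<Longrightarrow> continuous_on {t0..t1} (b \<omega>)"
    and meas: "\<And>t. t \<in> {t0..t1} \<Longrightarrow> (\<lambda>\<omega>. b \<omega> t) \<in> borel_measurable M"
    and "q \<in> {t0..t1}"
  shows "(\<lambda>\<omega>. lipschitz_integral_equation.picard_iterate f t0 (b \<omega>) x n q) \<in> borel_measurable M"
  using \<open>q \<in> {t0..t1}\<close>
proof (induction n arbitrary: q)
  case 0
  then show ?case
    by (simp add: lipschitz_integral_equation.picard_iterate_0[OF lipschitz_integral_equation_intro[OF cont]]
        cong: measurable_cong)
next
  case (Suc n)
  note equation = lipschitz_integral_equation_intro[OF cont]
  let ?z = "\<lambda>\<omega>. lipschitz_integral_equation.picard_iterate f t0 (b \<omega>) x n"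
  have drift: "(\<lambda>\<omega>. f s (?z \<omega> s)) \<in> borel_measurable M" if "s \<in> {t0..q}" for s
  proof -
    have "continuous_on UNIV (\<lambda>z. (s, z))" "range (\<lambda>z. (s, z)) \<subseteq> {t0..t1} \<times> UNIV"
      using that Suc.prems by (auto intro: continuous_intros)
    from continuous_on_compose2[OF continuous_drift this] have "continuous_on UNIV (f s)"
      by simp
    moreover have "(\<lambda>\<omega>. ?z \<omega> s) \<in> borel_measurable M"
      using Suc.IH[of s] that Suc.prems by simp
    ultimately show ?thesis
      using measurable_compose borel_measurable_continuous_onI by blast
  qed
  have "(\<lambda>\<omega>. integral {t0..q} (\<lambda>s. f s (?z \<omega> s))) \<in> borel_measurable M"
  proof (rule borel_measurable_integral_continuous)
    show "continuous_on {t0..q} (\<lambda>s. f s (?z \<omega> s))" if "\<omega> \<in> space M" for \<omega>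
      using Suc.prems
      by (intro continuous_on_subset[OF continuous_on_drift[OF
          lipschitz_integral_equation.continuous_on_picard_iterate[OF equation[OF that]]]]) auto
  qed (use Suc.prems drift in auto)
  then have "(\<lambda>\<omega>. x + integral {t0..q} (\<lambda>s. f s (?z \<omega> s)) + b \<omega> q) \<in> borel_measurable M"
    using meas[OF Suc.prems] by simp
  then show ?case
    by (simp add: lipschitz_integral_equation.picard_iterate_Suc[OF equation]
        lipschitz_integral_equation.picard_step_def[OF equation] cong: measurable_cong)
qed

lemma borel_measurable_solution:
  assumes "\<And>\<omega>. \<omega> \<in> space M \<Longrightarrow> continuous_on {t0..t1} (b \<omega>)"
    and "\<And>t. t \<in> {t0..t1} \<Longrightarrow> (\<lambda>\<omega>. b \<omega> t) \<in> borel_measurable M"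
    and "q \<in> {t0..t1}"
  shows "(\<lambda>\<omega>. lipschitz_integral_equation.solution f t0 (b \<omega>) x q) \<in> borel_measurable M"
proof (rule borel_measurable_LIMSEQ_real)
  show "(\<lambda>n. lipschitz_integral_equation.picard_iterate f t0 (b \<omega>) x n q)
      \<longlonglongrightarrow> lipschitz_integral_equation.solution f t0 (b \<omega>) x q" if "\<omega> \<in> space M" for \<omega>
    using assms(1)[OF that] assms(3)
    by (rule lipschitz_integral_equation.picard_iterate_tendsto[OF lipschitz_integral_equation_intro])
qed (use assms borel_measurable_picard_iterate in blast)

end

definition grid :: "real \<Rightarrow> real \<Rightarrow> nat \<Rightarrow> nat \<Rightarrow> real" where
  "grid t0 t1 n k = t0 + real k * (t1 - t0) / real n"

definition grid_index :: "real \<Rightarrow> real \<Rightarrow> nat \<Rightarrow> real \<Rightarrow> nat" where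
  "grid_index t0 t1 n t = nat \<lfloor>(t - t0) * real n / (t1 - t0)\<rfloor>"

lemma grid_mem:
  assumes "t0 \<le> t1" "k \<le> n" "0 < n"
  shows "grid t0 t1 n k \<in> {t0..t1}"
proof -
  have "real k * (t1 - t0) / real n \<le> real n * (t1 - t0) / real n"
    using assms by (intro divide_right_mono mult_right_mono) auto
  then show ?thesis
    using assms by (simp add: grid_def)
qed

lemma grid_step: "0 < n \<Longrightarrow> grid t0 t1 n (Suc k) - grid t0 t1 n k = (t1 - t0) / n"
  by (simp add: grid_def field_simps)

lemma grid_index_bounds:
  assumes "t0 < t1" "t \<in> {t0..t1}" "0 < n"
  shows "grid_index t0 t1 n t \<le> n" "grid t0 t1 n (grid_index t0 t1 n t) \<le> t"
    "t < grid t0 t1 n (grid_index t0 t1 n t) + (t1 - t0) / n"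
proof -
  define y where "y = (t - t0) * real n / (t1 - t0)"
  define k where "k = grid_index t0 t1 n t"
  have "0 \<le> y" "y \<le> n"
    using assms by (auto simp: y_def field_simps mult_right_mono)
  then have k: "real k \<le> y" "y < real k + 1" "real k \<le> n"
    by (auto simp: k_def grid_index_def y_def[symmetric]) linarith+
  then show "grid_index t0 t1 n t \<le> n"
    by (simp add: k_def)
  have t: "t = t0 + y * (t1 - t0) / n"
    using assms by (simp add: y_def)
  show "grid t0 t1 n (grid_index t0 t1 n t) \<le> t"
    using k assms unfolding k_def[symmetric] grid_def
    by (subst t) (intro add_left_mono divide_right_mono mult_right_mono; simp)
  have "y * (t1 - t0) / n < (real k + 1) * (t1 - t0) / n"
    using k assms by (intro divide_strict_right_mono mult_strict_right_mono) auto
  then show "t < grid t0 t1 n (grid_index t0 t1 n t) + (t1 - t0) / n"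
    unfolding k_def[symmetric] grid_def by (subst t) (simp add: add_divide_distrib distrib_right)
qed

lemma grid_index_mono: "t0 < t1 \<Longrightarrow> t \<le> t' \<Longrightarrow> grid_index t0 t1 n t \<le> grid_index t0 t1 n t'"
  unfolding grid_index_def
  by (intro nat_mono floor_mono divide_right_mono mult_right_mono) auto

lemma grid_index_close:
  fixes f :: "real \<Rightarrow> real"
  assumes "t0 < t1" and f: "continuous_on {t0..t1} f" and "0 < \<epsilon>"
  obtains N where
    "\<And>n t. N < n \<Longrightarrow> t \<in> {t0..t1} \<Longrightarrow> \<bar>f (grid t0 t1 n (grid_index t0 t1 n t)) - f t\<bar> < \<epsilon>"
proof -
  obtain \<delta> where "\<delta> > 0"
    and \<delta>: "\<And>t t'. t \<in> {t0..t1} \<Longrightarrow> t' \<in> {t0..t1} \<Longrightarrow> dist t t' < \<delta> \<Longrightarrow> dist (f t) (f t') < \<epsilon>"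
    using compact_uniformly_continuous[OF f compact_Icc] \<open>0 < \<epsilon>\<close>
    unfolding uniformly_continuous_on_def by metis
  obtain N :: nat where N: "(t1 - t0) / \<delta> < N"
    using reals_Archimedean2 by blast
  have "\<bar>f (grid t0 t1 n (grid_index t0 t1 n t)) - f t\<bar> < \<epsilon>" if "N < n" "t \<in> {t0..t1}" for n t
  proof -
    have "0 < n" "(t1 - t0) / \<delta> < n"
      using N that(1) by linarith+
    then have "(t1 - t0) / n < \<delta>"
      using \<open>\<delta> > 0\<close> by (simp add: field_simps)
    note index = grid_index_bounds[OF \<open>t0 < t1\<close> that(2) \<open>0 < n\<close>]
    have "grid t0 t1 n (grid_index t0 t1 n t) \<in> {t0..t1}"
      using index(1) \<open>t0 < t1\<close> \<open>0 < n\<close> by (intro grid_mem) auto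
    moreover have "dist (grid t0 t1 n (grid_index t0 t1 n t)) t < \<delta>"
      using index(2,3) \<open>(t1 - t0) / n < \<delta>\<close> unfolding dist_real_def by arith
    ultimately show ?thesis
      using \<delta> that(2) by (simp add: dist_real_def)
  qed
  then show ?thesis
    by (rule that)
qed

text \<open>A path that leaves a continuous band does so already at a grid point of some mesh, so the
  exit event is a countable union of events at fixed times.\<close>
lemma sets_exit_event:
  fixes X :: "'w \<Rightarrow> real \<Rightarrow> real"
  assumes "t0 < t1" and cont: "\<And>\<omega>. \<omega> \<in> space M \<Longrightarrow> continuous_on {t0..t1} (X \<omega>)"
    and meas: "\<And>t. t \<in> {t0..t1} \<Longrightarrow> (\<lambda>\<omega>. X \<omega> t) \<in> borel_measurable M"
    and lo: "continuous_on {t0..t1} lo" and hi: "continuous_on {t0..t1} hi"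
  shows "{\<omega> \<in> space M. \<exists>t\<in>{t0..t1}. X \<omega> t \<notin> {lo t..hi t}} \<in> sets M"
proof -
  let ?exit = "\<lambda>t. {\<omega> \<in> space M. X \<omega> t \<notin> {lo t..hi t}}"
  have exit: "?exit t \<in> sets M" if "t \<in> {t0..t1}" for t
  proof -
    have [measurable]: "(\<lambda>\<omega>. X \<omega> t) \<in> borel_measurable M"
      using meas[OF that] .
    have "?exit t = {\<omega> \<in> space M. X \<omega> t < lo t \<or> hi t < X \<omega> t}"
      by auto
    also have "\<dots> \<in> sets M"
      by measurable
    finally show ?thesis .
  qed
  have grid: "grid t0 t1 (Suc n) k \<in> {t0..t1}" if "k \<le> Suc n" for n k
    using that \<open>t0 < t1\<close> by (intro grid_mem) auto
  have "{\<omega> \<in> space M. \<exists>t\<in>{t0..t1}. X \<omega> t \<notin> {lo t..hi t}} =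
      (\<Union>n. \<Union>k\<in>{..Suc n}. ?exit (grid t0 t1 (Suc n) k))"
  proof (rule subset_antisym; rule subsetI)
    fix \<omega> assume "\<omega> \<in> {\<omega> \<in> space M. \<exists>t\<in>{t0..t1}. X \<omega> t \<notin> {lo t..hi t}}"
    then obtain t where \<omega>: "\<omega> \<in> space M" and t: "t \<in> {t0..t1}" "X \<omega> t \<notin> {lo t..hi t}"
      by blast
    define h where "h s = max (lo s - X \<omega> s) (X \<omega> s - hi s)" for s
    have "continuous_on {t0..t1} h"
      unfolding h_def using cont[OF \<omega>] lo hi by (intro continuous_intros)
    moreover have "0 < h t"
      using t(2) by (auto simp: h_def)
    ultimately obtain N where
      "\<And>n s. N < n \<Longrightarrow> s \<in> {t0..t1} \<Longrightarrow> \<bar>h (grid t0 t1 n (grid_index t0 t1 n s)) - h s\<bar> < h t"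
      using grid_index_close[OF \<open>t0 < t1\<close>] by blast
    from this[OF lessI t(1)] have "\<omega> \<in> ?exit (grid t0 t1 (Suc N) (grid_index t0 t1 (Suc N) t))"
      using \<omega> by (auto simp: h_def)
    moreover have "grid_index t0 t1 (Suc N) t \<le> Suc N"
      using grid_index_bounds[OF \<open>t0 < t1\<close> t(1)] by simp
    ultimately show "\<omega> \<in> (\<Union>n. \<Union>k\<in>{..Suc n}. ?exit (grid t0 t1 (Suc n) k))"
      by blast
  qed (use grid in blast)
  moreover have "(\<Union>k\<in>{..Suc n}. ?exit (grid t0 t1 (Suc n) k)) \<in> sets M" for n
    using exit grid by (intro sets.finite_UN) auto
  ultimately show ?thesis
    by simp
qed

section \<open>Barrier crossings\<close>

lemma nonneg_if_pos_greaterThanAtMost: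
  fixes f :: "real \<Rightarrow> real"
  assumes "\<sigma> < \<tau>" "continuous_on {\<sigma>..\<tau>} f" "\<And>s. s \<in> {\<sigma><..\<tau>} \<Longrightarrow> 0 < f s" "s \<in> {\<sigma>..\<tau>}"
  shows "0 \<le> f s"
proof -
  have "closed ({\<sigma>..\<tau>} \<inter> f -` {0..})"
    using assms(2) by (intro continuous_closed_preimage) auto
  moreover have "{\<sigma><..\<tau>} \<subseteq> {\<sigma>..\<tau>} \<inter> f -` {0..}"
    using assms(3) by (force intro: less_imp_le)
  ultimately have "closure {\<sigma><..\<tau>} \<subseteq> {\<sigma>..\<tau>} \<inter> f -` {0..}"
    by (intro closure_minimal)
  with assms(1,4) show ?thesis
    by auto
qed

text \<open>\<open>\<sigma>\<close> is the last time at which \<open>z \<le> h\<close>; on \<open>[\<sigma>, \<tau>]\<close> the drift is nonpositive, so the rise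
  of \<open>z - h\<close> there is due to \<open>b\<close> alone.\<close>
lemma barrier_crossing_increment:
  fixes z g h b :: "real \<Rightarrow> real"
  assumes "t0 \<le> \<tau>" and z: "continuous_on {t0..\<tau>} z" and g: "continuous_on {t0..\<tau>} g"
    and h: "continuous_on {t0..\<tau>} h"
    and eq: "\<And>t. t \<in> {t0..\<tau>} \<Longrightarrow> z t = x + integral {t0..t} g + b t"
    and start: "z t0 \<le> h t0" and finish: "h \<tau> < z \<tau>"
    and drift: "\<And>s. s \<in> {t0..\<tau>} \<Longrightarrow> h s \<le> z s \<Longrightarrow> g s \<le> 0"
  shows "\<exists>\<sigma>\<in>{t0..\<tau>}. z \<tau> - h \<sigma> \<le> b \<tau> - b \<sigma>"
proof -
  define S where "S = {t0..\<tau>} \<inter> (\<lambda>s. z s - h s) -` {..0}"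
  have "closed S"
    unfolding S_def using z h by (intro continuous_closed_preimage) (auto intro: continuous_intros)
  moreover have "t0 \<in> S" "bdd_above S"
    using start \<open>t0 \<le> \<tau>\<close> by (auto simp: S_def bdd_above_def)
  ultimately have "Sup S \<in> S"
    using closed_contains_Sup by blast
  define \<sigma> where "\<sigma> = Sup S"
  have \<sigma>: "t0 \<le> \<sigma>" "\<sigma> \<le> \<tau>" "z \<sigma> \<le> h \<sigma>"
    using \<open>Sup S \<in> S\<close> by (auto simp: S_def \<sigma>_def)
  have "h s < z s" if "s \<in> {\<sigma><..\<tau>}" for s
    using that cSup_upper[OF _ \<open>bdd_above S\<close>, of s] \<sigma> by (force simp: S_def \<sigma>_def)
  moreover have "\<sigma> < \<tau>"
    using \<sigma> finish by (metis order_le_less not_less)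
  moreover have "continuous_on {\<sigma>..\<tau>} (\<lambda>s. z s - h s)"
    using z h \<sigma> by (intro continuous_intros) (auto elim: continuous_on_subset)
  ultimately have above: "h s \<le> z s" if "s \<in> {\<sigma>..\<tau>}" for s
    using nonneg_if_pos_greaterThanAtMost[of \<sigma> \<tau> "\<lambda>s. z s - h s" s] that by simp
  have "integral {\<sigma>..\<tau>} g \<le> integral {\<sigma>..\<tau>} (\<lambda>_. 0::real)"
    using \<sigma> above drift
    by (intro integral_le integrable_continuous_interval continuous_on_subset[OF g]) auto
  moreover have "integral {t0..\<sigma>} g + integral {\<sigma>..\<tau>} g = integral {t0..\<tau>} g"
    using \<sigma> g by (intro Henstock_Kurzweil_Integration.integral_combine integrable_continuous_interval)
  ultimately have "z \<tau> - z \<sigma> \<le> b \<tau> - b \<sigma>"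
    using eq[of \<tau>] eq[of \<sigma>] \<sigma> \<open>t0 \<le> \<tau>\<close> by auto
  then show ?thesis
    using \<sigma> above[of \<sigma>] by (intro bexI[of _ \<sigma>]) auto
qed

lemma barrier_crossing_increment_below:
  fixes z g h b :: "real \<Rightarrow> real"
  assumes "t0 \<le> \<tau>" and z: "continuous_on {t0..\<tau>} z" and g: "continuous_on {t0..\<tau>} g"
    and h: "continuous_on {t0..\<tau>} h"
    and eq: "\<And>t. t \<in> {t0..\<tau>} \<Longrightarrow> z t = x + integral {t0..t} g + b t"
    and start: "h t0 \<le> z t0" and finish: "z \<tau> < h \<tau>"
    and drift: "\<And>s. s \<in> {t0..\<tau>} \<Longrightarrow> z s \<le> h s \<Longrightarrow> 0 \<le> g s"
  shows "\<exists>\<sigma>\<in>{t0..\<tau>}. h \<sigma> - z \<tau> \<le> b \<sigma> - b \<tau>"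
proof -
  have "\<exists>\<sigma>\<in>{t0..\<tau>}. - z \<tau> - - h \<sigma> \<le> - b \<tau> - - b \<sigma>"
  proof (rule barrier_crossing_increment[where x = "- x" and g = "\<lambda>s. - g s" and
        z = "\<lambda>t. - z t" and h = "\<lambda>t. - h t" and b = "\<lambda>t. - b t"])
    show "- z t = - x + integral {t0..t} (\<lambda>s. - g s) + - b t" if "t \<in> {t0..\<tau>}" for t
      using eq[OF that] by simp
  qed (use assms in \<open>auto intro: continuous_intros\<close>)
  then show ?thesis
    by auto
qed

section \<open>Drawdowns of Gaussian random walks\<close>

lemma normal_density_mult_exp:
  assumes "0 < \<sigma>"
  shows "normal_density 0 \<sigma> v * exp (\<mu> * v) = exp (\<mu>\<^sup>2 * \<sigma>\<^sup>2 / 2) * normal_density (\<mu> * \<sigma>\<^sup>2) \<sigma> v"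
proof -
  have "- v\<^sup>2 / (2 * \<sigma>\<^sup>2) + \<mu> * v = \<mu>\<^sup>2 * \<sigma>\<^sup>2 / 2 + - (v - \<mu> * \<sigma>\<^sup>2)\<^sup>2 / (2 * \<sigma>\<^sup>2)"
    using assms by (simp add: field_simps power2_eq_square)
  then show ?thesis
    unfolding normal_density_def by (simp add: mult_ac flip: exp_add)
qed

lemma has_bochner_integral_normal_exp:
  assumes "0 < \<sigma>"
  shows "has_bochner_integral lborel (\<lambda>v. normal_density 0 \<sigma> v * exp (\<mu> * v)) (exp (\<mu>\<^sup>2 * \<sigma>\<^sup>2 / 2))"
proof -
  have "has_bochner_integral lborel (normal_density (\<mu> * \<sigma>\<^sup>2) \<sigma>) 1"
    using assms by (simp add: has_bochner_integral_iff)
  from has_bochner_integral_mult_right[OF this, of "exp (\<mu>\<^sup>2 * \<sigma>\<^sup>2 / 2)"] show ?thesis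
    by (simp add: normal_density_mult_exp[OF assms])
qed

lemma has_bochner_integral_normal_cosh:
  assumes "0 < \<sigma>" "s\<^sup>2 = 1"
  shows "has_bochner_integral lborel (\<lambda>v. normal_density 0 \<sigma> v * cosh (l * (y - s * v)))
    (cosh (l * y) * exp (l\<^sup>2 * \<sigma>\<^sup>2 / 2))"
proof -
  have "(- l * s)\<^sup>2 = l\<^sup>2" "(l * s)\<^sup>2 = l\<^sup>2"
    using assms(2) by (simp_all add: power_mult_distrib)
  then have "has_bochner_integral lborel
      (\<lambda>v. exp (l * y) / 2 * (normal_density 0 \<sigma> v * exp ((- l * s) * v)) +
           exp (- l * y) / 2 * (normal_density 0 \<sigma> v * exp ((l * s) * v)))
      (exp (l * y) / 2 * exp (l\<^sup>2 * \<sigma>\<^sup>2 / 2) + exp (- l * y) / 2 * exp (l\<^sup>2 * \<sigma>\<^sup>2 / 2))"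
    using has_bochner_integral_normal_exp[OF assms(1)]
    by (intro has_bochner_integral_add has_bochner_integral_mult_right) metis+
  moreover have "(\<lambda>v. normal_density 0 \<sigma> v * cosh (l * (y - s * v))) =
      (\<lambda>v. exp (l * y) / 2 * (normal_density 0 \<sigma> v * exp ((- l * s) * v)) +
           exp (- l * y) / 2 * (normal_density 0 \<sigma> v * exp ((l * s) * v)))"
    by (rule ext) (simp add: cosh_field_def algebra_simps flip: exp_add)
  moreover have "exp (l * y) / 2 * exp (l\<^sup>2 * \<sigma>\<^sup>2 / 2) + exp (- l * y) / 2 * exp (l\<^sup>2 * \<sigma>\<^sup>2 / 2) =
      cosh (l * y) * exp (l\<^sup>2 * \<sigma>\<^sup>2 / 2)"
    by (simp add: cosh_field_def algebra_simps)
  ultimately show ?thesis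
    by (simp only:)
qed

text \<open>Lindley's recursion: \<open>walk_drawdown s w k\<close> is the distance \<open>max\<^sub>i\<^sub>\<le>\<^sub>k S\<^sub>i - S\<^sub>k\<close> of the walk
  \<open>S\<^sub>k = s * (w 0 + \<dots> + w (k - 1))\<close> below its running maximum.\<close>
fun walk_drawdown :: "real \<Rightarrow> (nat \<Rightarrow> real) \<Rightarrow> nat \<Rightarrow> real" where
  "walk_drawdown s w 0 = 0"
| "walk_drawdown s w (Suc k) = max (walk_drawdown s w k - s * w k) 0"

definition drawdown_reaches :: "real \<Rightarrow> real \<Rightarrow> (nat \<Rightarrow> real) \<Rightarrow> nat \<Rightarrow> bool" where
  "drawdown_reaches s c w m \<longleftrightarrow> (\<exists>j\<le>m. c \<le> walk_drawdown s w j)"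

definition drawdown_potential :: "real \<Rightarrow> real \<Rightarrow> real \<Rightarrow> nat \<Rightarrow> (nat \<Rightarrow> real) \<Rightarrow> real" where
  "drawdown_potential l s c m w =
     (if drawdown_reaches s c w m then 1 else cosh (l * walk_drawdown s w m) / cosh (l * c))"

lemma walk_drawdown_nonneg: "0 \<le> walk_drawdown s w k"
  by (cases k) auto

lemma walk_drawdown_ge_increment: "i \<le> j \<Longrightarrow> - s * (\<Sum>k\<in>{i..<j}. w k) \<le> walk_drawdown s w j"
proof (induction j)
  case 0
  then show ?case by simp
next
  case (Suc j)
  show ?case
  proof (cases "i = Suc j")
    case True
    then show ?thesis using walk_drawdown_nonneg[of s w "Suc j"] by simp
  next
    case False
    with Suc.prems have "i \<le> j" by simp
    then have "- s * (\<Sum>k\<in>{i..<Suc j}. w k) = - s * (\<Sum>k\<in>{i..<j}. w k) - s * w j"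
      by (simp add: algebra_simps)
    also have "\<dots> \<le> walk_drawdown s w (Suc j)"
      using Suc.IH[OF \<open>i \<le> j\<close>] by simp
    finally show ?thesis .
  qed
qed

lemma walk_drawdown_restrict: "k \<le> m \<Longrightarrow> walk_drawdown s (restrict w {..<m}) k = walk_drawdown s w k"
  by (induction k) auto

lemma drawdown_reaches_restrict:
  assumes "m \<le> n"
  shows "drawdown_reaches s c (restrict w {..<n}) m = drawdown_reaches s c w m"
proof -
  have "walk_drawdown s (restrict w {..<n}) j = walk_drawdown s w j" if "j \<le> m" for j
    using that assms by (intro walk_drawdown_restrict) simp
  then show ?thesis
    by (auto simp: drawdown_reaches_def)
qed

lemma drawdown_potential_restrict:
  "m \<le> n \<Longrightarrow> drawdown_potential l s c m (restrict w {..<n}) = drawdown_potential l s c m w"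
  by (simp add: drawdown_potential_def drawdown_reaches_restrict walk_drawdown_restrict)

lemma borel_measurable_walk_drawdown:
  "k \<le> m \<Longrightarrow> (\<lambda>w. walk_drawdown s w k) \<in> borel_measurable (PiM {..<m} (\<lambda>_. borel))"
proof (induction k)
  case (Suc k)
  then have "(\<lambda>w. w k) \<in> borel_measurable (PiM {..<m} (\<lambda>_. borel))"
    by (intro measurable_component_singleton) auto
  with Suc show ?case
    by (simp add: borel_measurable_max borel_measurable_diff borel_measurable_times)
qed simp

lemma measurable_drawdown_reaches:
  assumes "m \<le> n"
  shows "Measurable.pred (PiM {..<n} (\<lambda>_. borel)) (\<lambda>w. drawdown_reaches s c w m)"
proof -
  have [measurable]: "(\<lambda>w. walk_drawdown s w j) \<in> borel_measurable (PiM {..<n} (\<lambda>_. borel))" if "j \<le> m" for j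
    using that assms by (intro borel_measurable_walk_drawdown) simp
  show ?thesis
    unfolding drawdown_reaches_def by measurable
qed

lemma borel_measurable_cosh [measurable]: "(cosh :: real \<Rightarrow> real) \<in> borel_measurable borel"
  by (intro borel_measurable_continuous_onI continuous_intros)

lemma borel_measurable_drawdown_potential:
  assumes "m \<le> n"
  shows "drawdown_potential l s c m \<in> borel_measurable (PiM {..<n} (\<lambda>_. borel))"
proof -
  have [measurable]: "(\<lambda>w. walk_drawdown s w m) \<in> borel_measurable (PiM {..<n} (\<lambda>_. borel))"
    "Measurable.pred (PiM {..<n} (\<lambda>_. borel)) (\<lambda>w. drawdown_reaches s c w m)"
    using assms by (auto intro: borel_measurable_walk_drawdown measurable_drawdown_reaches)
  then show ?thesis
    unfolding drawdown_potential_def[abs_def] by measurable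
qed

lemma cosh_mult_max_le: "cosh (l * max z 0) \<le> cosh (l * z :: real)"
  using cosh_real_ge_1[of "l * z"] by (cases "z \<ge> 0") (simp_all add: max_def)

lemma drawdown_potential_Suc_le:
  assumes "0 < l" "0 < c"
  shows "drawdown_potential l s c (Suc m) w \<le>
    (if drawdown_reaches s c w m then 1 else cosh (l * (walk_drawdown s w m - s * w m)) / cosh (l * c))"
proof -
  have "0 < cosh (l * c)"
    by (rule cosh_real_pos)
  have "cosh (l * c) \<le> cosh (l * walk_drawdown s w (Suc m))" if "c \<le> walk_drawdown s w (Suc m)"
    using that assms by (subst cosh_real_nonneg_le_iff) auto
  then show ?thesis
    using \<open>0 < cosh (l * c)\<close> cosh_mult_max_le[of l "walk_drawdown s w m - s * w m"]
    by (auto simp: drawdown_potential_def drawdown_reaches_def le_Suc_eq divide_right_mono)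
qed

lemma nn_integral_normal_drawdown_step:
  assumes "0 < \<sigma>" "s\<^sup>2 = 1" "0 < l" "0 < c"
  shows "(\<integral>\<^sup>+v. ennreal (normal_density 0 \<sigma> v) *
      ennreal (if drawdown_reaches s c u m then 1
               else cosh (l * (walk_drawdown s u m - s * v)) / cosh (l * c)) \<partial>lborel)
    \<le> ennreal (exp (l\<^sup>2 * \<sigma>\<^sup>2 / 2) * drawdown_potential l s c m u)"
proof (cases "drawdown_reaches s c u m")
  case True
  have "(\<integral>\<^sup>+v. ennreal (normal_density 0 \<sigma> v) \<partial>lborel) = 1"
    using assms(1) by (simp add: nn_integral_eq_integral)
  then show ?thesis
    using True by (simp add: drawdown_potential_def)
next
  case False
  let ?y = "walk_drawdown s u m"
  have "0 < cosh (l * c)"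
    by (rule cosh_real_pos)
  have "has_bochner_integral lborel (\<lambda>v. normal_density 0 \<sigma> v * cosh (l * (?y - s * v)) / cosh (l * c))
      (cosh (l * ?y) * exp (l\<^sup>2 * \<sigma>\<^sup>2 / 2) / cosh (l * c))"
    using has_bochner_integral_normal_cosh[OF assms(1,2)] by (rule has_bochner_integral_divide_zero)
  then have "(\<integral>\<^sup>+v. ennreal (normal_density 0 \<sigma> v * cosh (l * (?y - s * v)) / cosh (l * c)) \<partial>lborel)
      = ennreal (cosh (l * ?y) * exp (l\<^sup>2 * \<sigma>\<^sup>2 / 2) / cosh (l * c))"
    using \<open>0 < cosh (l * c)\<close> cosh_real_ge_1
    by (subst nn_integral_eq_integrable) (auto simp: has_bochner_integral_iff intro!: divide_nonneg_pos)
  then show ?thesis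
    using False \<open>0 < cosh (l * c)\<close> cosh_real_ge_1
    by (simp add: drawdown_potential_def ennreal_mult'[symmetric] mult_ac)
qed

context prob_space
begin

lemma nn_integral_indep_var:
  assumes indep: "indep_var N1 X N2 Y" and f: "f \<in> borel_measurable (N1 \<Otimes>\<^sub>M N2)"
  shows "(\<integral>\<^sup>+\<omega>. f (X \<omega>, Y \<omega>) \<partial>M) = (\<integral>\<^sup>+x. \<integral>\<^sup>+y. f (x, y) \<partial>distr M N2 Y \<partial>distr M N1 X)"
proof -
  have X: "X \<in> measurable M N1" and Y: "Y \<in> measurable M N2"
    using indep_var_rv1[OF indep] indep_var_rv2[OF indep] by auto
  interpret Y: prob_space "distr M N2 Y"
    using Y by (rule prob_space_distr)
  have "(\<integral>\<^sup>+\<omega>. f (X \<omega>, Y \<omega>) \<partial>M) = (\<integral>\<^sup>+p. f p \<partial>distr M (N1 \<Otimes>\<^sub>M N2) (\<lambda>\<omega>. (X \<omega>, Y \<omega>)))"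
    using X Y f by (simp add: nn_integral_distr)
  also have "\<dots> = (\<integral>\<^sup>+p. f p \<partial>(distr M N1 X \<Otimes>\<^sub>M distr M N2 Y))"
    using indep unfolding indep_var_distribution_eq by simp
  also have "\<dots> = (\<integral>\<^sup>+x. \<integral>\<^sup>+y. f (x, y) \<partial>distr M N2 Y \<partial>distr M N1 X)"
    using f by (subst Y.nn_integral_fst[symmetric]) simp_all
  finally show ?thesis .
qed

context
  fixes X :: "nat \<Rightarrow> 'a \<Rightarrow> real" and N :: nat and \<sigma> :: real
  assumes gaussian: "\<And>i. i < N \<Longrightarrow> distributed M lborel (X i) (\<lambda>y. ennreal (normal_density 0 \<sigma> y))"
    and indep: "indep_vars (\<lambda>_. borel) X {..<N}"
begin

lemma borel_measurable_step: "i < N \<Longrightarrow> X i \<in> borel_measurable M"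
  using distributed_measurable[OF gaussian] by simp

lemma borel_measurable_drawdown_potential_walk:
  assumes "m \<le> N"
  shows "(\<lambda>\<omega>. drawdown_potential l s c m (\<lambda>i. X i \<omega>)) \<in> borel_measurable M"
proof -
  have "(\<lambda>\<omega>. restrict (\<lambda>i. X i \<omega>) {..<N}) \<in> measurable M (PiM {..<N} (\<lambda>_. borel))"
    using borel_measurable_step by (intro measurable_restrict) auto
  from measurable_compose[OF this borel_measurable_drawdown_potential[OF assms]] show ?thesis
    using assms by (simp add: drawdown_potential_restrict)
qed

lemma nn_integral_step:
  assumes "m < N" "g \<in> borel_measurable borel"
  shows "(\<integral>\<^sup>+w. g (w m) \<partial>distr M (PiM {m} (\<lambda>_. borel)) (\<lambda>\<omega>. restrict (\<lambda>i. X i \<omega>) {m}))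
    = (\<integral>\<^sup>+v. ennreal (normal_density 0 \<sigma> v) * g v \<partial>lborel)"
proof -
  have "(\<lambda>\<omega>. restrict (\<lambda>i. X i \<omega>) {m}) \<in> measurable M (PiM {m} (\<lambda>_. borel))"
    using borel_measurable_step \<open>m < N\<close> by (intro measurable_restrict) auto
  moreover have "(\<lambda>w. w m) \<in> borel_measurable (PiM {m} (\<lambda>_. borel))"
    by (rule measurable_component_singleton) simp
  ultimately show ?thesis
    using assms by (simp add: nn_integral_distr distributed_nn_integral[OF gaussian])
qed

text \<open>The stopped potential is a supermartingale up to the factor \<open>exp (l\<^sup>2 \<sigma>\<^sup>2 / 2)\<close>: before the
  threshold is reached it is \<open>cosh\<close> of the drawdown, and conditioning \<open>cosh (l (y - s v))\<close> on a
  centred Gaussian step \<open>v\<close> multiplies it exactly by that factor.\<close>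
lemma nn_integral_drawdown_potential_Suc_le:
  assumes "s\<^sup>2 = 1" "0 < \<sigma>" "0 < l" "0 < c" "m < N"
  shows "(\<integral>\<^sup>+\<omega>. drawdown_potential l s c (Suc m) (\<lambda>i. X i \<omega>) \<partial>M)
    \<le> exp (l\<^sup>2 * \<sigma>\<^sup>2 / 2) * (\<integral>\<^sup>+\<omega>. drawdown_potential l s c m (\<lambda>i. X i \<omega>) \<partial>M)"
proof -
  let ?V = "\<lambda>\<omega>. restrict (\<lambda>i. X i \<omega>) {..<m}" and ?PV = "PiM {..<m} (\<lambda>_. borel :: real measure)"
  let ?e = "exp (l\<^sup>2 * \<sigma>\<^sup>2 / 2)"
  define \<psi> where "\<psi> u v = (if drawdown_reaches s c u m then 1
      else cosh (l * (walk_drawdown s u m - s * v)) / cosh (l * c))" for u v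
  let ?W = "\<lambda>\<omega>. restrict (\<lambda>i. X i \<omega>) {m}" and ?PW = "PiM {m} (\<lambda>_. borel :: real measure)"
  have indep_step: "indep_var ?PV ?V ?PW ?W"
    using \<open>m < N\<close> by (intro indep_var_restrict[OF indep]) auto
  have [measurable]: "Measurable.pred ?PV (\<lambda>u. drawdown_reaches s c u m)"
    "(\<lambda>u. walk_drawdown s u m) \<in> borel_measurable ?PV"
    by (auto intro: measurable_drawdown_reaches borel_measurable_walk_drawdown)
  have [measurable]: "(\<lambda>w. w m) \<in> borel_measurable ?PW"
    by (rule measurable_component_singleton) simp
  have \<psi>_meas: "(\<lambda>p. ennreal (\<psi> (fst p) (snd p m))) \<in> borel_measurable (?PV \<Otimes>\<^sub>M ?PW)"
    unfolding \<psi>_def by measurable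
  have "(\<integral>\<^sup>+\<omega>. drawdown_potential l s c (Suc m) (\<lambda>i. X i \<omega>) \<partial>M) \<le> (\<integral>\<^sup>+\<omega>. \<psi> (?V \<omega>) (X m \<omega>) \<partial>M)"
    unfolding \<psi>_def drawdown_reaches_restrict[OF order_refl] walk_drawdown_restrict[OF order_refl]
    by (intro nn_integral_mono ennreal_leI drawdown_potential_Suc_le \<open>0 < l\<close> \<open>0 < c\<close>)
  also have "\<dots> = (\<integral>\<^sup>+u. \<integral>\<^sup>+w. \<psi> u (w m) \<partial>distr M ?PW ?W \<partial>distr M ?PV ?V)"
    using nn_integral_indep_var[OF indep_step \<psi>_meas] by simp
  also have "\<dots> \<le> (\<integral>\<^sup>+u. ennreal (?e * drawdown_potential l s c m u) \<partial>distr M ?PV ?V)"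
  proof (rule nn_integral_mono)
    fix u
    have [measurable]: "(\<lambda>v. ennreal (\<psi> u v)) \<in> borel_measurable borel"
      unfolding \<psi>_def by measurable
    have "(\<integral>\<^sup>+w. \<psi> u (w m) \<partial>distr M ?PW ?W) = (\<integral>\<^sup>+v. ennreal (normal_density 0 \<sigma> v) * \<psi> u v \<partial>lborel)"
      by (rule nn_integral_step[OF \<open>m < N\<close>]) measurable
    also have "\<dots> \<le> ennreal (?e * drawdown_potential l s c m u)"
      unfolding \<psi>_def using assms by (intro nn_integral_normal_drawdown_step)
    finally show "(\<integral>\<^sup>+w. \<psi> u (w m) \<partial>distr M ?PW ?W) \<le> ennreal (?e * drawdown_potential l s c m u)" .
  qed
  also have "\<dots> = (\<integral>\<^sup>+\<omega>. ennreal ?e * drawdown_potential l s c m (\<lambda>i. X i \<omega>) \<partial>M)"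
    using borel_measurable_drawdown_potential[of m m l s c] borel_measurable_step \<open>m < N\<close>
    by (subst nn_integral_distr) (auto intro!: measurable_restrict simp: drawdown_potential_restrict ennreal_mult')
  also have "\<dots> = ?e * (\<integral>\<^sup>+\<omega>. drawdown_potential l s c m (\<lambda>i. X i \<omega>) \<partial>M)"
    using borel_measurable_drawdown_potential_walk[of m] \<open>m < N\<close> by (simp add: nn_integral_cmult)
  finally show ?thesis .
qed

lemma nn_integral_drawdown_potential_le:
  assumes "s\<^sup>2 = 1" "0 < \<sigma>" "0 < l" "0 < c" "m \<le> N"
  shows "(\<integral>\<^sup>+\<omega>. drawdown_potential l s c m (\<lambda>i. X i \<omega>) \<partial>M)
    \<le> ennreal (exp (l\<^sup>2 * \<sigma>\<^sup>2 * m / 2) / cosh (l * c))"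
  using \<open>m \<le> N\<close>
proof (induction m)
  case 0
  then show ?case
    using \<open>0 < c\<close> by (simp add: drawdown_potential_def drawdown_reaches_def emeasure_space_1)
next
  case (Suc m)
  have "(\<integral>\<^sup>+\<omega>. drawdown_potential l s c (Suc m) (\<lambda>i. X i \<omega>) \<partial>M)
      \<le> exp (l\<^sup>2 * \<sigma>\<^sup>2 / 2) * (\<integral>\<^sup>+\<omega>. drawdown_potential l s c m (\<lambda>i. X i \<omega>) \<partial>M)"
    using Suc.prems assms by (intro nn_integral_drawdown_potential_Suc_le) simp_all
  also have "\<dots> \<le> exp (l\<^sup>2 * \<sigma>\<^sup>2 / 2) * ennreal (exp (l\<^sup>2 * \<sigma>\<^sup>2 * m / 2) / cosh (l * c))"
    using Suc by (intro mult_left_mono) simp_all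
  also have "exp (l\<^sup>2 * \<sigma>\<^sup>2 / 2) * (exp (l\<^sup>2 * \<sigma>\<^sup>2 * m / 2) / cosh (l * c))
      = exp (l\<^sup>2 * \<sigma>\<^sup>2 * Suc m / 2) / cosh (l * c)"
    by (simp add: field_simps flip: exp_add)
  then have "ennreal (exp (l\<^sup>2 * \<sigma>\<^sup>2 / 2)) * ennreal (exp (l\<^sup>2 * \<sigma>\<^sup>2 * m / 2) / cosh (l * c))
      = ennreal (exp (l\<^sup>2 * \<sigma>\<^sup>2 * Suc m / 2) / cosh (l * c))"
    by (simp flip: ennreal_mult)
  finally show ?case .
qed

lemma prob_drawdown_reaches_le:
  assumes "s\<^sup>2 = 1" "0 < \<sigma>" "0 < l" "0 < c"
  shows "{\<omega> \<in> space M. drawdown_reaches s c (\<lambda>i. X i \<omega>) N} \<in> events"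
    and "prob {\<omega> \<in> space M. drawdown_reaches s c (\<lambda>i. X i \<omega>) N} \<le> exp (l\<^sup>2 * \<sigma>\<^sup>2 * N / 2) / cosh (l * c)"
proof -
  let ?A = "{\<omega> \<in> space M. drawdown_reaches s c (\<lambda>i. X i \<omega>) N}"
  have "(\<lambda>\<omega>. restrict (\<lambda>i. X i \<omega>) {..<N}) \<in> measurable M (PiM {..<N} (\<lambda>_. borel))"
    using borel_measurable_step by (intro measurable_restrict) auto
  from measurable_compose[OF this measurable_drawdown_reaches[OF order_refl]]
  have "Measurable.pred M (\<lambda>\<omega>. drawdown_reaches s c (\<lambda>i. X i \<omega>) N)"
    by (simp add: drawdown_reaches_restrict)
  then show "?A \<in> events"
    by measurable
  have "emeasure M ?A = (\<integral>\<^sup>+\<omega>. indicator ?A \<omega> \<partial>M)"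
    using \<open>?A \<in> events\<close> by simp
  also have "\<dots> \<le> (\<integral>\<^sup>+\<omega>. drawdown_potential l s c N (\<lambda>i. X i \<omega>) \<partial>M)"
    by (intro nn_integral_mono) (simp add: drawdown_potential_def indicator_def)
  also have "\<dots> \<le> ennreal (exp (l\<^sup>2 * \<sigma>\<^sup>2 * N / 2) / cosh (l * c))"
    using assms by (intro nn_integral_drawdown_potential_le) simp_all
  finally show "prob ?A \<le> exp (l\<^sup>2 * \<sigma>\<^sup>2 * N / 2) / cosh (l * c)"
    by (simp add: emeasure_eq_measure ennreal_le_iff)
qed

end

end

section \<open>Oscillations of Brownian paths\<close>

lemma (in prob_space) prob_le_if_eventually_in:
  assumes "A \<in> events" and G: "\<And>n. G n \<in> events" "\<And>n. prob (G n) \<le> p"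
    and eventually: "\<And>\<omega>. \<omega> \<in> A \<Longrightarrow> eventually (\<lambda>n. \<omega> \<in> G n) sequentially"
  shows "prob A \<le> p"
proof -
  define H where "H k = (\<Inter>n\<in>{k..}. G n)" for k
  have H: "H k \<in> events" for k
    unfolding H_def using G by (intro sets.countable_INT') auto
  have "(\<lambda>k. prob (H k)) \<longlonglongrightarrow> prob (\<Union>k. H k)"
    using H by (intro finite_Lim_measure_incseq) (auto simp: incseq_def H_def)
  moreover have "prob (H k) \<le> p" for k
    using G H by (intro order_trans[OF finite_measure_mono G(2)]) (auto simp: H_def)
  ultimately have "prob (\<Union>k. H k) \<le> p"
    by (intro LIMSEQ_le_const2) auto
  moreover have "A \<subseteq> (\<Union>k. H k)"
  proof
    fix \<omega> assume "\<omega> \<in> A"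
    then obtain k where "\<And>n. n \<ge> k \<Longrightarrow> \<omega> \<in> G n"
      using eventually unfolding eventually_sequentially by blast
    then show "\<omega> \<in> (\<Union>k. H k)"
      by (auto simp: H_def)
  qed
  then have "prob A \<le> prob (\<Union>k. H k)"
    using H by (intro finite_measure_mono) auto
  ultimately show ?thesis
    by linarith
qed

lemma brownian_motion_prob_space: "brownian_motion M B \<Longrightarrow> prob_space M"
  by (simp add: brownian_motion_def)

lemma brownian_motion_measurable: "brownian_motion M B \<Longrightarrow> 0 \<le> t \<Longrightarrow> B t \<in> borel_measurable M"
  by (simp add: brownian_motion_def)

lemma brownian_motion_continuous:
  "brownian_motion M B \<Longrightarrow> \<omega> \<in> space M \<Longrightarrow> 0 \<le> t0 \<Longrightarrow> continuous_on {t0..t1} (\<lambda>t. B t \<omega>)"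
  unfolding brownian_motion_def by (auto elim!: continuous_on_subset)

lemma brownian_motion_increment:
  "brownian_motion M B \<Longrightarrow> 0 \<le> s \<Longrightarrow> s < t \<Longrightarrow>
    distributed M lborel (\<lambda>\<omega>. B t \<omega> - B s \<omega>) (\<lambda>y. ennreal (normal_density 0 (sqrt (t - s)) y))"
  by (simp add: brownian_motion_def)

lemma brownian_motion_indep_increments:
  "brownian_motion M B \<Longrightarrow> 0 \<le> ts 0 \<Longrightarrow> (\<And>i. i < n \<Longrightarrow> ts i < ts (Suc i)) \<Longrightarrow>
    prob_space.indep_vars M (\<lambda>_. borel) (\<lambda>i \<omega>. B (ts (Suc i)) \<omega> - B (ts i) \<omega>) {..<n}"
  by (simp add: brownian_motion_def)

lemma brownian_grid_increments:
  assumes BM: "brownian_motion M B" and "0 \<le> t0" "t0 < t1" "0 < n"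
  shows "\<And>i. i < n \<Longrightarrow> distributed M lborel (\<lambda>\<omega>. B (grid t0 t1 n (Suc i)) \<omega> - B (grid t0 t1 n i) \<omega>)
      (\<lambda>y. ennreal (normal_density 0 (sqrt ((t1 - t0) / n)) y))"
    and "prob_space.indep_vars M (\<lambda>_. borel)
      (\<lambda>i \<omega>. B (grid t0 t1 n (Suc i)) \<omega> - B (grid t0 t1 n i) \<omega>) {..<n}"
proof -
  have "0 < (t1 - t0) / n" "0 \<le> real i * (t1 - t0) / n" for i
    using assms by simp_all
  then have grid: "0 \<le> grid t0 t1 n i" "grid t0 t1 n i < grid t0 t1 n (Suc i)" for i
    using grid_step[OF \<open>0 < n\<close>, of t0 t1 i] \<open>0 \<le> t0\<close> by (auto simp: grid_def)
  then have "distributed M lborel (\<lambda>\<omega>. B (grid t0 t1 n (Suc i)) \<omega> - B (grid t0 t1 n i) \<omega>)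
      (\<lambda>y. ennreal (normal_density 0 (sqrt (grid t0 t1 n (Suc i) - grid t0 t1 n i)) y))" for i
    using BM by (intro brownian_motion_increment)
  then show "distributed M lborel (\<lambda>\<omega>. B (grid t0 t1 n (Suc i)) \<omega> - B (grid t0 t1 n i) \<omega>)
      (\<lambda>y. ennreal (normal_density 0 (sqrt ((t1 - t0) / n)) y))" for i
    unfolding grid_step[OF \<open>0 < n\<close>] .
  show "prob_space.indep_vars M (\<lambda>_. borel)
      (\<lambda>i \<omega>. B (grid t0 t1 n (Suc i)) \<omega> - B (grid t0 t1 n i) \<omega>) {..<n}"
    using BM grid by (intro brownian_motion_indep_increments)
qed

lemma exp_div_cosh_le:
  fixes c T :: real
  assumes "0 < T"
  shows "exp (c\<^sup>2 / (2 * T)) / cosh (c\<^sup>2 / T) \<le> 2 * exp (- c\<^sup>2 / (2 * T))"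
proof -
  let ?u = "c\<^sup>2 / T"
  have "exp ?u / 2 \<le> cosh ?u"
    unfolding cosh_field_def using exp_gt_zero[of "- ?u"] by simp
  then have "exp (c\<^sup>2 / (2 * T)) / cosh ?u \<le> exp (c\<^sup>2 / (2 * T)) / (exp ?u / 2)"
    by (intro divide_left_mono) auto
  also have "\<dots> = 2 * exp (c\<^sup>2 / (2 * T) - ?u)"
    by (simp only: exp_diff) simp
  also have "c\<^sup>2 / (2 * T) - ?u = - c\<^sup>2 / (2 * T)"
    using assms by (simp add: field_simps)
  finally show ?thesis .
qed

text \<open>The choice \<open>l = c / (t1 - t0)\<close> optimises the exponential bound of the drawdown walk.\<close>
lemma prob_brownian_grid_drawdown_le:
  fixes M :: "'w measure" and B :: "real \<Rightarrow> 'w \<Rightarrow> real" and t0 t1 s c :: real and n :: nat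
  assumes BM: "brownian_motion M B" and "0 \<le> t0" "t0 < t1" "s\<^sup>2 = 1" "0 < c"
  defines "A \<equiv> {\<omega> \<in> space M. drawdown_reaches s c (\<lambda>i. B (grid t0 t1 n (Suc i)) \<omega> - B (grid t0 t1 n i) \<omega>) n}"
  shows "A \<in> sets M" "measure M A \<le> 2 * exp (- c\<^sup>2 / (2 * (t1 - t0)))"
proof -
  interpret prob_space M
    using BM by (rule brownian_motion_prob_space)
  let ?T = "t1 - t0"
  have "A \<in> sets M \<and> measure M A \<le> 2 * exp (- c\<^sup>2 / (2 * ?T))"
  proof (cases "n = 0")
    case True
    then show ?thesis
      using \<open>0 < c\<close> by (simp add: A_def drawdown_reaches_def)
  next
    case False
    then have "0 < n" by simp
    have "0 < sqrt (?T / n)" "0 < c / ?T"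
      using False \<open>t0 < t1\<close> \<open>0 < c\<close> by auto
    note drawdown = prob_drawdown_reaches_le[OF brownian_grid_increments[OF BM \<open>0 \<le> t0\<close> \<open>t0 < t1\<close> \<open>0 < n\<close>]
        \<open>s\<^sup>2 = 1\<close> this \<open>0 < c\<close>, folded A_def]
    have "(c / X)\<^sup>2 * (X / n) * n / 2 = c\<^sup>2 / (2 * X)" if "0 < X" for X
      using that False by (simp add: power2_eq_square field_simps)
    then have "(c / ?T)\<^sup>2 * (sqrt (?T / n))\<^sup>2 * n / 2 = c\<^sup>2 / (2 * ?T)"
      using \<open>t0 < t1\<close> by simp
    moreover have "c / ?T * c = c\<^sup>2 / ?T"
      by (simp add: power2_eq_square)
    ultimately have "prob A \<le> exp (c\<^sup>2 / (2 * ?T)) / cosh (c\<^sup>2 / ?T)"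
      using drawdown(2) by (simp only:)
    with drawdown(1) show ?thesis
      using exp_div_cosh_le[of ?T c] \<open>t0 < t1\<close> by simp
  qed
  then show "A \<in> sets M" "measure M A \<le> 2 * exp (- c\<^sup>2 / (2 * ?T))"
    by auto
qed

lemma grid_drawdown_eventually:
  fixes f :: "real \<Rightarrow> real"
  assumes "t0 < t1" and f: "continuous_on {t0..t1} f" and "s\<^sup>2 = 1"
    and "t0 \<le> \<sigma>" "\<sigma> \<le> \<tau>" "\<tau> \<le> t1" and r: "r \<le> s * (f \<sigma> - f \<tau>)" and "0 < \<epsilon>"
  shows "eventually (\<lambda>n. drawdown_reaches s (r - \<epsilon>)
    (\<lambda>i. f (grid t0 t1 n (Suc i)) - f (grid t0 t1 n i)) n) sequentially"
proof -
  obtain N where near: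
    "\<And>n t. N < n \<Longrightarrow> t \<in> {t0..t1} \<Longrightarrow> \<bar>f (grid t0 t1 n (grid_index t0 t1 n t)) - f t\<bar> < \<epsilon> / 2"
    using grid_index_close[OF \<open>t0 < t1\<close> f, of "\<epsilon> / 2"] \<open>0 < \<epsilon>\<close> by auto
  have "s = 1 \<or> s = - 1"
    using \<open>s\<^sup>2 = 1\<close> by (simp add: power2_eq_1_iff)
  then have sign: "- \<bar>y\<bar> \<le> s * y" "s * y \<le> \<bar>y\<bar>" for y
    by auto
  have \<sigma>: "\<sigma> \<in> {t0..t1}" and \<tau>: "\<tau> \<in> {t0..t1}"
    using assms by auto
  have "drawdown_reaches s (r - \<epsilon>) (\<lambda>i. f (grid t0 t1 n (Suc i)) - f (grid t0 t1 n i)) n" if "N < n" for n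
  proof -
    let ?g = "grid t0 t1 n"
    define i j where "i = grid_index t0 t1 n \<sigma>" and "j = grid_index t0 t1 n \<tau>"
    have "i \<le> j"
      unfolding i_def j_def using \<open>t0 < t1\<close> \<open>\<sigma> \<le> \<tau>\<close> by (rule grid_index_mono)
    have telescope: "(\<Sum>k\<in>{i..<j}. f (?g (Suc k)) - f (?g k)) = f (?g j) - f (?g i)"
      using \<open>i \<le> j\<close> by (rule sum_Suc_diff')
    have "r - \<epsilon> \<le> s * (f (?g i) - f (?g j))"
      using r near[OF that \<sigma>] near[OF that \<tau>] sign[of "f (?g i) - f \<sigma>"] sign[of "f (?g j) - f \<tau>"]
      unfolding i_def j_def by (simp add: algebra_simps)
    also have "\<dots> = - s * (\<Sum>k\<in>{i..<j}. f (?g (Suc k)) - f (?g k))"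
      unfolding telescope by (simp add: algebra_simps)
    also have "\<dots> \<le> walk_drawdown s (\<lambda>k. f (?g (Suc k)) - f (?g k)) j"
      using \<open>i \<le> j\<close> by (rule walk_drawdown_ge_increment)
    moreover have "j \<le> n"
      using grid_index_bounds(1)[OF \<open>t0 < t1\<close> \<tau>] that by (simp add: j_def)
    ultimately show ?thesis
      by (auto simp: drawdown_reaches_def)
  qed
  then show ?thesis
    unfolding eventually_sequentially by (meson Suc_le_eq)
qed

text \<open>If the path of \<open>B\<close> moves by at least \<open>r\<close> between two times of \<open>[t0, t1]\<close>, then along all
  fine grids the walk of the increments, or of their negatives, has a drawdown of at least \<open>c\<close>.\<close>
lemma prob_brownian_oscillation_le_below:
  assumes BM: "brownian_motion M B" and "0 \<le> t0" "t0 < t1" "0 < c" "c < r" and A: "A \<in> sets M"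
    and oscillation: "\<And>\<omega>. \<omega> \<in> A \<Longrightarrow> \<exists>\<sigma> \<tau>. t0 \<le> \<sigma> \<and> \<sigma> \<le> \<tau> \<and> \<tau> \<le> t1 \<and> r \<le> \<bar>B \<tau> \<omega> - B \<sigma> \<omega>\<bar>"
  shows "measure M A \<le> 4 * exp (- c\<^sup>2 / (2 * (t1 - t0)))"
proof -
  interpret prob_space M
    using BM by (rule brownian_motion_prob_space)
  define G where "G n s = {\<omega> \<in> space M. drawdown_reaches s c
      (\<lambda>i. B (grid t0 t1 n (Suc i)) \<omega> - B (grid t0 t1 n i) \<omega>) n}" for n s
  have G: "G n s \<in> events" "prob (G n s) \<le> 2 * exp (- c\<^sup>2 / (2 * (t1 - t0)))" if "s\<^sup>2 = 1" for n s
    using prob_brownian_grid_drawdown_le[OF BM \<open>0 \<le> t0\<close> \<open>t0 < t1\<close> that \<open>0 < c\<close>, of n]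
    unfolding G_def by auto
  show ?thesis
  proof (rule prob_le_if_eventually_in[OF A])
    show "G n 1 \<union> G n (- 1) \<in> events" for n
      using G by simp
    show "prob (G n 1 \<union> G n (- 1)) \<le> 4 * exp (- c\<^sup>2 / (2 * (t1 - t0)))" for n
    proof -
      have "prob (G n 1 \<union> G n (- 1)) \<le> prob (G n 1) + prob (G n (- 1))"
        using G by (intro measure_Un_le) simp_all
      then show ?thesis
        using G(2)[of 1 n] G(2)[of "- 1" n] by simp
    qed
    fix \<omega> assume "\<omega> \<in> A"
    then have "\<omega> \<in> space M"
      using sets.sets_into_space[OF A] by blast
    obtain \<sigma> \<tau> where "t0 \<le> \<sigma>" "\<sigma> \<le> \<tau>" "\<tau> \<le> t1" "r \<le> \<bar>B \<tau> \<omega> - B \<sigma> \<omega>\<bar>"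
      using oscillation[OF \<open>\<omega> \<in> A\<close>] by blast
    then obtain s :: real where s: "s = 1 \<or> s = - 1" "r \<le> s * (B \<sigma> \<omega> - B \<tau> \<omega>)"
      by (metis abs_real_def minus_diff_eq mult_1 mult_minus_left)
    then have "s\<^sup>2 = 1"
      by auto
    have "eventually (\<lambda>n. \<omega> \<in> G n s) sequentially"
      using grid_drawdown_eventually[OF \<open>t0 < t1\<close> brownian_motion_continuous[OF BM \<open>\<omega> \<in> space M\<close> \<open>0 \<le> t0\<close>]
          \<open>s\<^sup>2 = 1\<close> \<open>t0 \<le> \<sigma>\<close> \<open>\<sigma> \<le> \<tau>\<close> \<open>\<tau> \<le> t1\<close> s(2), of "r - c"] \<open>c < r\<close> \<open>\<omega> \<in> space M\<close>
      unfolding G_def by simp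
    with s(1) show "eventually (\<lambda>n. \<omega> \<in> G n 1 \<union> G n (- 1)) sequentially"
      by (auto elim: eventually_mono)
  qed
qed

lemma prob_brownian_oscillation_le:
  assumes BM: "brownian_motion M B" and "0 \<le> t0" "t0 < t1" "0 < r" and A: "A \<in> sets M"
    and oscillation: "\<And>\<omega>. \<omega> \<in> A \<Longrightarrow> \<exists>\<sigma> \<tau>. t0 \<le> \<sigma> \<and> \<sigma> \<le> \<tau> \<and> \<tau> \<le> t1 \<and> r \<le> \<bar>B \<tau> \<omega> - B \<sigma> \<omega>\<bar>"
  shows "measure M A \<le> 4 * exp (- r\<^sup>2 / (2 * (t1 - t0)))"
proof (rule tendsto_lowerbound)
  show "((\<lambda>c. 4 * exp (- c\<^sup>2 / (2 * (t1 - t0)))) \<longlongrightarrow> 4 * exp (- r\<^sup>2 / (2 * (t1 - t0)))) (at_left r)"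
    using \<open>t0 < t1\<close> by (intro tendsto_intros) auto
  show "eventually (\<lambda>c. measure M A \<le> 4 * exp (- c\<^sup>2 / (2 * (t1 - t0)))) (at_left r)"
    using eventually_at_left_real[OF \<open>0 < r\<close>]
    by (rule eventually_mono) (rule prob_brownian_oscillation_le_below[OF assms(1-3) _ _ A oscillation]; simp)
qed simp

section \<open>Leaving the band around \<open>sqrt (a t)\<close>\<close>

lemma clamp_real: "L \<le> U \<Longrightarrow> clamp L U z = max L (min U (z::real))"
  unfolding clamp_def Basis_real_def by auto

lemma clamp_square_lipschitz:
  fixes L U z w :: real
  assumes "0 \<le> L" "L \<le> U"
  shows "\<bar>(clamp L U z)\<^sup>2 - (clamp L U w)\<^sup>2\<bar> \<le> 2 * U * \<bar>z - w\<bar>"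
proof -
  let ?c = "clamp L U z" and ?d = "clamp L U w"
  have range: "L \<le> ?c" "?c \<le> U" "L \<le> ?d" "?d \<le> U"
    using assms by (auto simp: clamp_real)
  have "?c\<^sup>2 - ?d\<^sup>2 = (?c - ?d) * (?c + ?d)"
    by (simp add: power2_eq_square algebra_simps)
  then have "\<bar>?c\<^sup>2 - ?d\<^sup>2\<bar> = \<bar>?c - ?d\<bar> * (?c + ?d)"
    using range assms by (simp add: abs_mult)
  also have "\<dots> \<le> \<bar>z - w\<bar> * (2 * U)"
    using range assms dist_clamps_le_dist_args[of L U z w]
    by (intro mult_mono) (auto simp: dist_real_def)
  finally show ?thesis by (simp add: mult.commute)
qed

lemma continuous_on_clamp: "continuous_on S (clamp (L::real) U)"
  using clamp_continuous_on[of L U "\<lambda>z. z"] by simp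

lemma lipschitz_drift_clamped:
  assumes "t0 < t1" "continuous_on {t0..t1} a" "0 \<le> L" "L \<le> U"
  shows "lipschitz_drift (\<lambda>s z. a s - (clamp L U z)\<^sup>2) t0 t1 (2 * U)"
proof
  have "continuous_on ({t0..t1} \<times> UNIV) (\<lambda>p. a (fst p) - (clamp L U (snd p))\<^sup>2)"
    by (intro continuous_intros continuous_on_compose2[OF assms(2)]
        continuous_on_compose2[OF continuous_on_clamp[of UNIV]]) auto
  then show "continuous_on ({t0..t1} \<times> UNIV) (\<lambda>(s, z). a s - (clamp L U z)\<^sup>2)"
    by (simp add: case_prod_unfold)
  show "\<bar>(a s - (clamp L U z)\<^sup>2) - (a s - (clamp L U w)\<^sup>2)\<bar> \<le> 2 * U * \<bar>z - w\<bar>" for s z w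
    using clamp_square_lipschitz[OF assms(3,4), of w z] by (simp add: abs_minus_commute)
qed (fact assms(1))

locale riccati_exit =
  fixes M :: "'w measure" and B :: "real \<Rightarrow> 'w \<Rightarrow> real" and a :: "real \<Rightarrow> real"
    and t0 t1 d D x :: real
  assumes brownian: "brownian_motion M B"
    and mono_a: "\<And>s t. s \<le> t \<Longrightarrow> a s \<le> a t" and continuous_a: "continuous_on {t0..t1} a"
    and times: "0 < t0" "t0 < t1"
    and margins: "0 < d" "d < D" "D < sqrt (a t0)"
    and start: "x \<in> {sqrt (a t0) - d .. sqrt (a t0) + d}"
begin

abbreviation band :: "real \<Rightarrow> real set" where
  "band t \<equiv> {sqrt (a t0) - D .. sqrt (a t) + D}"

abbreviation lower :: real where "lower \<equiv> sqrt (a t0) - D"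
abbreviation upper :: real where "upper \<equiv> sqrt (a t1) + D"

definition clamped_drift :: "real \<Rightarrow> real \<Rightarrow> real" where
  "clamped_drift s z = a s - (clamp lower upper z)\<^sup>2"

definition clamped_solution :: "'w \<Rightarrow> real \<Rightarrow> real" where
  "clamped_solution \<omega> = lipschitz_integral_equation.solution clamped_drift t0 (\<lambda>t. B t \<omega> - B t0 \<omega>) x"

lemma sqrt_a_mono: "s \<le> t \<Longrightarrow> sqrt (a s) \<le> sqrt (a t)"
  using mono_a by simp

lemma a_pos: "t0 \<le> s \<Longrightarrow> 0 < a s"
proof -
  assume "t0 \<le> s"
  have "0 < sqrt (a t0)"
    using margins by linarith
  then show "0 < a s"
    using mono_a[OF \<open>t0 \<le> s\<close>] by simp
qed

lemma lower_le_upper: "0 \<le> lower" "lower \<le> upper"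
proof -
  have "sqrt (a t0) \<le> sqrt (a t1)"
    using times by (intro sqrt_a_mono) simp
  then show "0 \<le> lower" "lower \<le> upper"
    using margins by linarith+
qed

lemma lipschitz_drift_clamped_drift: "lipschitz_drift clamped_drift t0 t1 (2 * upper)"
  unfolding clamped_drift_def[abs_def] using times continuous_a lower_le_upper
  by (intro lipschitz_drift_clamped) auto

lemma continuous_on_noise: "\<omega> \<in> space M \<Longrightarrow> continuous_on {t0..t1} (\<lambda>t. B t \<omega> - B t0 \<omega>)"
  using brownian_motion_continuous[OF brownian, of \<omega> t0 t1] times by (intro continuous_intros) auto

lemma clamped_equation:
  "\<omega> \<in> space M \<Longrightarrow> lipschitz_integral_equation clamped_drift t0 t1 (2 * upper) (\<lambda>t. B t \<omega> - B t0 \<omega>)"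
  by (rule lipschitz_drift.lipschitz_integral_equation_intro[OF lipschitz_drift_clamped_drift continuous_on_noise])

lemma continuous_on_clamped_solution: "\<omega> \<in> space M \<Longrightarrow> continuous_on {t0..t1} (clamped_solution \<omega>)"
  unfolding clamped_solution_def by (rule lipschitz_integral_equation.continuous_on_solution[OF clamped_equation])

lemma clamped_drift_in_band: "s \<in> {t0..t1} \<Longrightarrow> z \<in> band s \<Longrightarrow> a s - z\<^sup>2 = clamped_drift s z"
proof -
  assume "s \<in> {t0..t1}" "z \<in> band s"
  moreover have "sqrt (a s) \<le> sqrt (a t1)"
    using \<open>s \<in> {t0..t1}\<close> mono_a by simp
  ultimately have "lower \<le> z" "z \<le> upper"
    unfolding atLeastAtMost_iff by linarith+
  then show ?thesis
    by (simp add: clamped_drift_def)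
qed

lemma clamped_drift_nonneg_below:
  assumes "t0 \<le> s" "z \<le> sqrt (a t0) - d"
  shows "0 \<le> clamped_drift s z"
proof -
  have "(clamp lower upper z)\<^sup>2 \<le> (sqrt (a t0))\<^sup>2"
    using assms margins lower_le_upper by (intro power_mono) (auto simp: clamp_real)
  then show ?thesis
    using mono_a[OF \<open>t0 \<le> s\<close>] a_pos[of t0] by (simp add: clamped_drift_def)
qed

lemma clamped_drift_nonpos_above:
  assumes "s \<in> {t0..t1}" "sqrt (a s) + d \<le> z"
  shows "clamped_drift s z \<le> 0"
proof -
  have "sqrt (a s) \<le> sqrt (a t1)"
    using assms by (intro sqrt_a_mono) auto
  then have "sqrt (a s) \<le> upper" "sqrt (a s) \<le> z"
    using assms(2) margins by linarith+
  then have "sqrt (a s) \<le> min upper z"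
    by simp
  also have "\<dots> \<le> clamp lower upper z"
    using lower_le_upper by (simp add: clamp_real)
  finally have "(sqrt (a s))\<^sup>2 \<le> (clamp lower upper z)\<^sup>2"
    using a_pos[of s] assms(1) by (intro power_mono) auto
  then show ?thesis
    using a_pos[of s] assms by (simp add: clamped_drift_def)
qed

lemma clamped_solution_eq:
  assumes "\<omega> \<in> space M" "t \<in> {t0..t1}"
  shows "clamped_solution \<omega> t =
    x + integral {t0..t} (\<lambda>s. clamped_drift s (clamped_solution \<omega> s)) + (B t \<omega> - B t0 \<omega>)"
  using lipschitz_integral_equation.picard_step_solution[OF clamped_equation[OF assms(1)] assms(2)]
  by (simp add: clamped_solution_def lipschitz_integral_equation.picard_step_def[OF clamped_equation[OF assms(1)]])

lemma solves_on_in_band_iff: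
  assumes "\<omega> \<in> space M"
  shows "(\<exists>z. solves_on a B \<omega> t0 t1 x z \<and> (\<forall>t\<in>{t0..t1}. z t \<in> band t))
    \<longleftrightarrow> (\<forall>t\<in>{t0..t1}. clamped_solution \<omega> t \<in> band t)"
  using lipschitz_integral_equation.solution_in_region_iff[OF clamped_equation[OF assms],
      where R = band and g = "\<lambda>s z. a s - z\<^sup>2", OF clamped_drift_in_band]
  by (simp add: solves_on_def clamped_solution_def conj_assoc)

lemma sets_clamped_exit: "{\<omega> \<in> space M. \<exists>t\<in>{t0..t1}. clamped_solution \<omega> t \<notin> band t} \<in> sets M"
proof (rule sets_exit_event)
  show "continuous_on {t0..t1} (clamped_solution \<omega>)" if "\<omega> \<in> space M" for \<omega>
    using that by (rule continuous_on_clamped_solution)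
  have "(\<lambda>\<omega>. B t \<omega> - B t0 \<omega>) \<in> borel_measurable M" if "t \<in> {t0..t1}" for t
    using that times by (intro borel_measurable_diff brownian_motion_measurable[OF brownian]) auto
  then show "(\<lambda>\<omega>. clamped_solution \<omega> t) \<in> borel_measurable M" if "t \<in> {t0..t1}" for t
    unfolding clamped_solution_def
    using continuous_on_noise that
    by (intro lipschitz_drift.borel_measurable_solution[OF lipschitz_drift_clamped_drift,
          where b = "\<lambda>\<omega> t. B t \<omega> - B t0 \<omega>"])
  show "continuous_on {t0..t1} (\<lambda>t. sqrt (a t) + D)"
    using continuous_a by (intro continuous_intros)
qed (use times in auto)

text \<open>Below \<open>sqrt (a t0) - d\<close> the drift is nonnegative and above \<open>sqrt (a t) + d\<close> it is nonpositive,
  so between the last visit of this inner band and the exit only the noise moves the solution, and it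
  has to move it by more than \<open>D - d\<close>.\<close>
lemma clamped_exit_oscillation:
  assumes \<omega>: "\<omega> \<in> space M" and \<tau>: "\<tau> \<in> {t0..t1}" "clamped_solution \<omega> \<tau> \<notin> band \<tau>"
  shows "\<exists>\<sigma>. t0 \<le> \<sigma> \<and> \<sigma> \<le> \<tau> \<and> D - d \<le> \<bar>B \<tau> \<omega> - B \<sigma> \<omega>\<bar>"
proof -
  let ?z = "clamped_solution \<omega>" and ?g = "\<lambda>s. clamped_drift s (clamped_solution \<omega> s)"
  have sub: "{t0..\<tau>} \<subseteq> {t0..t1}"
    using \<tau> by auto
  have z: "continuous_on {t0..\<tau>} ?z" and g: "continuous_on {t0..\<tau>} ?g"
    using lipschitz_drift.continuous_on_drift[OF lipschitz_drift_clamped_drift continuous_on_clamped_solution[OF \<omega>]]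
      continuous_on_clamped_solution[OF \<omega>]
    by (auto intro: continuous_on_subset[OF _ sub])
  have eq: "?z t = x + integral {t0..t} ?g + (B t \<omega> - B t0 \<omega>)" if "t \<in> {t0..\<tau>}" for t
    using clamped_solution_eq[OF \<omega>] that sub by blast
  have "?z t0 = x"
    using eq[of t0] \<tau> by simp
  consider "?z \<tau> < sqrt (a t0) - D" | "sqrt (a \<tau>) + D < ?z \<tau>"
    using \<tau>(2) by force
  then show ?thesis
  proof cases
    case 1
    have "\<exists>\<sigma>\<in>{t0..\<tau>}. (sqrt (a t0) - d) - ?z \<tau> \<le> (B \<sigma> \<omega> - B t0 \<omega>) - (B \<tau> \<omega> - B t0 \<omega>)"
      using \<tau> 1 start margins \<open>?z t0 = x\<close> clamped_drift_nonneg_below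
      by (intro barrier_crossing_increment_below[OF _ z g _ eq]) auto
    with 1 show ?thesis
      by force
  next
    case 2
    have "continuous_on {t0..\<tau>} (\<lambda>s. sqrt (a s) + d)"
      using continuous_on_subset[OF continuous_a sub] by (intro continuous_intros)
    then have "\<exists>\<sigma>\<in>{t0..\<tau>}. ?z \<tau> - (sqrt (a \<sigma>) + d) \<le> (B \<tau> \<omega> - B t0 \<omega>) - (B \<sigma> \<omega> - B t0 \<omega>)"
      using \<tau> 2 start margins \<open>?z t0 = x\<close> clamped_drift_nonpos_above sub
      by (intro barrier_crossing_increment[OF _ z g _ eq]) auto
    then obtain \<sigma> where "\<sigma> \<in> {t0..\<tau>}" "?z \<tau> - (sqrt (a \<sigma>) + d) \<le> B \<tau> \<omega> - B \<sigma> \<omega>"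
      by auto
    moreover have "sqrt (a \<sigma>) \<le> sqrt (a \<tau>)"
      using \<open>\<sigma> \<in> {t0..\<tau>}\<close> by (intro sqrt_a_mono) simp
    ultimately have "D - d \<le> B \<tau> \<omega> - B \<sigma> \<omega>"
      using 2 by linarith
    with \<open>\<sigma> \<in> {t0..\<tau>}\<close> show ?thesis
      by force
  qed
qed

theorem prob_no_solution_in_band_le:
  "{\<omega> \<in> space M. \<not> (\<exists>z. solves_on a B \<omega> t0 t1 x z \<and> (\<forall>t\<in>{t0..t1}. z t \<in> band t))} \<in> sets M \<and>
   measure M {\<omega> \<in> space M. \<not> (\<exists>z. solves_on a B \<omega> t0 t1 x z \<and> (\<forall>t\<in>{t0..t1}. z t \<in> band t))}
     \<le> 4 * exp (- (D - d)\<^sup>2 / (2 * (t1 - t0)))"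
proof -
  have "{\<omega> \<in> space M. \<not> (\<exists>z. solves_on a B \<omega> t0 t1 x z \<and> (\<forall>t\<in>{t0..t1}. z t \<in> band t))}
      = {\<omega> \<in> space M. \<exists>t\<in>{t0..t1}. clamped_solution \<omega> t \<notin> band t}"
    using solves_on_in_band_iff by blast
  moreover have "measure M {\<omega> \<in> space M. \<exists>t\<in>{t0..t1}. clamped_solution \<omega> t \<notin> band t}
      \<le> 4 * exp (- (D - d)\<^sup>2 / (2 * (t1 - t0)))"
  proof (rule prob_brownian_oscillation_le[OF brownian _ _ _ sets_clamped_exit])
    fix \<omega> assume "\<omega> \<in> {\<omega> \<in> space M. \<exists>t\<in>{t0..t1}. clamped_solution \<omega> t \<notin> band t}"
    then obtain \<tau> where "\<omega> \<in> space M" "\<tau> \<in> {t0..t1}" "clamped_solution \<omega> \<tau> \<notin> band \<tau>"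
      by blast
    with clamped_exit_oscillation show "\<exists>\<sigma> \<tau>. t0 \<le> \<sigma> \<and> \<sigma> \<le> \<tau> \<and> \<tau> \<le> t1 \<and> D - d \<le> \<bar>B \<tau> \<omega> - B \<sigma> \<omega>\<bar>"
      by (meson atLeastAtMost_iff)
  qed (use times margins in auto)
  ultimately show ?thesis
    using sets_clamped_exit by simp
qed

end

theorem lemma6p1:
  fixes M :: "'w measure" and B :: "real \<Rightarrow> 'w \<Rightarrow> real"
    and \<beta> a0 t0 t1 d D x :: real
  defines "a \<equiv> (\<lambda>t::real. a0 + \<beta> * t / 4)"
  assumes BM: "brownian_motion M B"
    and "\<beta> > 0" and "a0 > 0"
    and "0 < t0" and "t0 < t1"
    and "0 < d" and "d < D" and "D < sqrt (a t0)"
    and "x \<in> {sqrt (a t0) - d .. sqrt (a t0) + d}"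
  shows "{\<omega> \<in> space M. \<not> (\<exists>z. solves_on a B \<omega> t0 t1 x z \<and>
            (\<forall>t\<in>{t0..t1}. z t \<in> {sqrt (a t0) - D .. sqrt (a t) + D}))} \<in> sets M
       \<and> measure M {\<omega> \<in> space M. \<not> (\<exists>z. solves_on a B \<omega> t0 t1 x z \<and>
            (\<forall>t\<in>{t0..t1}. z t \<in> {sqrt (a t0) - D .. sqrt (a t) + D}))}
         \<le> 4 * exp (- (D - d)\<^sup>2 / (2 * (t1 - t0)))"
proof -
  have "a s \<le> a t" if "s \<le> t" for s t
    using that \<open>\<beta> > 0\<close> by (simp add: a_def divide_right_mono)
  moreover have "continuous_on {t0..t1} a"
    unfolding a_def by (intro continuous_intros) auto
  ultimately have "riccati_exit M B a t0 t1 d D x"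
    using assms(2-) by unfold_locales blast+
  then show ?thesis
    by (rule riccati_exit.prob_no_solution_in_band_le)
qed

end
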